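(* Let $R_0>0$, $T>0$, $D=[0,R_0]$, $L^2(D)=L^2([0,R_0];r^2)$, $\lambda_n=(n\pi/R_0)^2$ and $\omega_n(r)=\frac{\sqrt2\, n\pi}{\sqrt{R_0^3}}\frac{\sin(n\pi r/R_0)}{n\pi r/R_0}$ for $n\ge1$. Let $a:[0,T]\to\mathbb{R}$ satisfy $0<a_0\le a(t)\le a_1$. Let $B^H$ be a fractional Brownian motion with Hurst index $H\in(0,1)$. Assume $f,g\in L^2(D)$ with $\|g\|_{L^2(D)}\ne0$, and $h\in L^\infty(0,T)$ with $h\ge C(h)>0$ a.e. on $(0,T)$. With $f_n=\int_0^{R_0}r^2f\omega_n\,dr$, $g_n=\int_0^{R_0}r^2g\omega_n\,dr$, define for $n\ge1$ $$u_n(T)=f_n\int_0^T h(\tau)e^{-\lambda_n\int_\tau^T a(s)ds}\,d\tau+g_n\int_0^T e^{-\lambda_n\int_\tau^T a(s)ds}\,dB^H(\tau),$$ the Fourier coefficients of the final-time value $u(\cdot,T)$ of the mild solution $u(r,t)=\sum_n u_n(t)\omega_n(r)$ (with $T$ replaced by $t$ in the formula). Then $f$ and $|g|$ (i.e. $g$ up to sign) are uniquely determined by the data set $\{\mathbb{E}(u_n(T)),\ \mathrm{Cov}(u_m(T),u_n(T)) : m,n\in\mathbb{N}\}$.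
   Context: $u$ is the mild solution of $u_t=a(t)[u_{rr}+\frac{2}{r}u_r]+f(r)h(t)+g(r)\dot B^H(t)$ on $0<r<R_0$, $0<t<T$, with $u(r,0)=0$, $u(R_0,t)=0$, $u$ bounded as $r\to0$. The functions $\omega_n$ form a complete orthonormal system of $L^2([0,R_0];r^2)$ (inner product $\int_0^{R_0}r^2\phi\psi\,dr$). A fractional Brownian motion $B^H$ is a centered Gaussian process with $B^H(0)=0$ and covariance $\mathbb{E}[B^H(t)B^H(s)]=\frac12(t^{2H}+s^{2H}-|t-s|^{2H})$; stochastic integrals of deterministic integrands are Wiener integrals with respect to $B^H$. $a,h,H$ are known; the unknowns are $f$ and $g$. *)

theory Defs
  imports "HOL-Probability.Probability"
begin

definition lam :: "real \<Rightarrow> nat \<Rightarrow> real" where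
  "lam R0 n = (real n * pi / R0)^2"

definition omega :: "real \<Rightarrow> nat \<Rightarrow> real \<Rightarrow> real" where
  "omega R0 n r =
     sqrt 2 * (real n * pi) / sqrt (R0^3) *
     (let x = real n * pi * r / R0 in if x = 0 then 1 else sin x / x)"

definition L2r :: "real \<Rightarrow> (real \<Rightarrow> real) \<Rightarrow> bool" where
  "L2r R0 f \<longleftrightarrow> set_borel_measurable lborel {0..R0} f \<and>
      set_integrable lborel {0..R0} (\<lambda>r. r^2 * (f r)^2)"

definition L2r_norm_sq :: "real \<Rightarrow> (real \<Rightarrow> real) \<Rightarrow> real" where
  "L2r_norm_sq R0 f = (LINT r:{0..R0}|lborel. r^2 * (f r)^2)"

definition coef :: "real \<Rightarrow> (real \<Rightarrow> real) \<Rightarrow> nat \<Rightarrow> real" where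
  "coef R0 f n = (LINT r:{0..R0}|lborel. r^2 * f r * omega R0 n r)"

definition centered_gaussian :: "'w measure \<Rightarrow> ('w \<Rightarrow> real) \<Rightarrow> bool" where
  "centered_gaussian M X \<longleftrightarrow>
     (\<exists>\<sigma>>0. distributed M lborel X (normal_density 0 \<sigma>)) \<or>
     (X \<in> borel_measurable M \<and> (AE w in M. X w = 0))"

definition fbm :: "'w measure \<Rightarrow> real \<Rightarrow> (real \<Rightarrow> 'w \<Rightarrow> real) \<Rightarrow> bool" where
  "fbm M H B \<longleftrightarrow> prob_space M \<and> 0 < H \<and> H < 1 \<and>
     (\<forall>t\<ge>0. B t \<in> borel_measurable M) \<and>
     (AE w in M. B 0 w = 0) \<and>
     (\<forall>S c. finite S \<longrightarrow> S \<subseteq> {0..} \<longrightarrow>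
        centered_gaussian M (\<lambda>w. \<Sum>t\<in>S. c t * B t w)) \<and>
     (\<forall>s\<ge>0. \<forall>t\<ge>0. integrable M (\<lambda>w. B t w * B s w) \<and>
        integral\<^sup>L M (\<lambda>w. B t w * B s w) =
          (t powr (2*H) + s powr (2*H) - \<bar>t - s\<bar> powr (2*H)) / 2)"

definition riemann_sum ::
  "(real \<Rightarrow> 'w \<Rightarrow> real) \<Rightarrow> real \<Rightarrow> (real \<Rightarrow> real) \<Rightarrow> nat \<Rightarrow> 'w \<Rightarrow> real" where
  "riemann_sum B T \<phi> k w =
     (\<Sum>i<Suc k. \<phi> (T * real i / real (Suc k)) *
        (B (T * real (Suc i) / real (Suc k)) w - B (T * real i / real (Suc k)) w))"

definition wiener_integral ::
  "'w measure \<Rightarrow> (real \<Rightarrow> 'w \<Rightarrow> real) \<Rightarrow> real \<Rightarrow> (real \<Rightarrow> real) \<Rightarrow> 'w \<Rightarrow> real" where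
  "wiener_integral M B T \<phi> = (SOME X. X \<in> borel_measurable M \<and>
     (\<lambda>k. \<integral>\<^sup>+ w. ennreal ((riemann_sum B T \<phi> k w - X w)^2) \<partial>M) \<longlonglongrightarrow> 0)"

definition covariance :: "'w measure \<Rightarrow> ('w \<Rightarrow> real) \<Rightarrow> ('w \<Rightarrow> real) \<Rightarrow> real" where
  "covariance M X Y =
     integral\<^sup>L M (\<lambda>w. (X w - integral\<^sup>L M X) * (Y w - integral\<^sup>L M Y))"

definition u_coef ::
  "'w measure \<Rightarrow> (real \<Rightarrow> 'w \<Rightarrow> real) \<Rightarrow> real \<Rightarrow> real \<Rightarrow> (real \<Rightarrow> real) \<Rightarrow> (real \<Rightarrow> real)
    \<Rightarrow> (real \<Rightarrow> real) \<Rightarrow> (real \<Rightarrow> real) \<Rightarrow> nat \<Rightarrow> 'w \<Rightarrow> real" where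
  "u_coef M B R0 T a h f g n w =
     coef R0 f n *
       (LINT \<tau>:{0..T}|lborel. h \<tau> * exp (- lam R0 n * (LINT s:{\<tau>..T}|lborel. a s)))
     + coef R0 g n *
       wiener_integral M B T (\<lambda>\<tau>. exp (- lam R0 n * (LINT s:{\<tau>..T}|lborel. a s))) w"

end

theory Submission
  imports Defs
begin

text \<open>
  The final-time coefficients are \<open>u\<^sub>n(T) = f\<^sub>n K\<^sub>n + g\<^sub>n X\<^sub>n\<close>, where
  \<open>K\<^sub>n = \<integral>\<^sub>0\<^sup>T h(\<tau>) \<phi>\<^sub>n(\<tau>) d\<tau> > 0\<close> and \<open>X\<^sub>n\<close> is the centred Wiener integral of the
  Duhamel kernel \<open>\<phi>\<^sub>n(\<tau>) = exp (- \<lambda>\<^sub>n \<integral>\<^sub>\<tau>\<^sup>T a)\<close>, which is positive and nondecreasing.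
  Hence the means give \<open>f\<^sub>n\<close>, and the covariances give the products \<open>g\<^sub>m g\<^sub>n E[X\<^sub>m X\<^sub>n]\<close>
  with \<open>E[X\<^sub>m X\<^sub>n] > 0\<close>, because the increments \<open>B\<^sub>T - B\<^sub>t\<close> of fBm are positively
  correlated; the products fix \<open>(g\<^sub>n)\<close> up to one global sign. Completeness of the sines
  \<open>sin (n \<pi> r / R0)\<close> on \<open>[0, R0]\<close> then turns equal coefficients into a.e. equality.

  As the Wiener integral is defined as an \<open>L\<^sup>2\<close> limit of Riemann sums, mean and covariance
  are computed on the sums; these converge since, by Abel summation, a monotone integrand
  only meets the fBm increments, whose \<open>L\<^sup>2\<close> norm is \<open>\<bar>t - s\<bar>\<^sup>H\<close>.
\<close>

section \<open>Completeness of the sine system on an interval\<close>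

lemma integrable_mult_bounded:
  fixes E g :: "real \<Rightarrow> real"
  assumes E: "integrable lborel E" and g: "g \<in> borel_measurable borel"
    and bound: "\<And>x. E x \<noteq> 0 \<Longrightarrow> \<bar>g x\<bar> \<le> K"
  shows "integrable lborel (\<lambda>x. E x * g x)"
proof (rule Bochner_Integration.integrable_bound[where f="\<lambda>x. \<bar>K\<bar> * E x"])
  show "integrable lborel (\<lambda>x. \<bar>K\<bar> * E x)" using E by simp
  show "(\<lambda>x. E x * g x) \<in> borel_measurable lborel" using E g by measurable
  show "AE x in lborel. norm (E x * g x) \<le> norm (\<bar>K\<bar> * E x)"
  proof (rule AE_I2)
    fix x
    have "\<bar>E x\<bar> * \<bar>g x\<bar> \<le> \<bar>E x\<bar> * \<bar>K\<bar>"
      using bound[of x] by (cases "E x = 0") (auto intro: mult_left_mono)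
    then show "norm (E x * g x) \<le> norm (\<bar>K\<bar> * E x)" by (simp add: abs_mult mult.commute)
  qed
qed

lemma abs_sin_mult_le: "\<bar>y\<bar> \<le> K \<Longrightarrow> \<bar>sin t * y\<bar> \<le> (K::real)"
  by (metis abs_ge_zero abs_mult abs_sin_le_one mult_le_one mult_right_le_one_le order.trans
      mult_left_le_one_le mult_right_mono)

text \<open>Since \<open>2 sin((m+1)t) cos t = sin((m+2)t) + sin(mt)\<close>, the moments against
  \<open>cos\<^sup>k(t) sin(nt)\<close> reduce to the sine moments by induction on \<open>k\<close>.\<close>
lemma integral_cos_power_sin_eq_0:
  fixes E :: "real \<Rightarrow> real"
  assumes E: "integrable lborel E"
    and sin_moments: "\<And>n. n \<ge> 1 \<Longrightarrow> (\<integral>x. E x * sin (real n * (pi*x/R0)) \<partial>lborel) = 0"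
  shows "(\<integral>x. E x * (cos (pi*x/R0) ^ k * sin (real n * (pi*x/R0))) \<partial>lborel) = 0"
proof (induction k arbitrary: n)
  case 0
  show ?case using sin_moments[of n] by (cases "n = 0") simp_all
next
  case (Suc k)
  show ?case
  proof (cases n)
    case (Suc m)
    have product: "cos t ^ Suc k * sin (real n * t) =
        (cos t ^ k * sin (real (Suc (Suc m)) * t) + cos t ^ k * sin (real m * t)) / 2" for t
    proof -
      have "sin (real n * t) * cos t = (sin (real (Suc (Suc m)) * t) + sin (real m * t)) / 2"
        unfolding sin_times_cos Suc by (simp add: algebra_simps)
      then have "cos t ^ k * (sin (real n * t) * cos t) =
          (cos t ^ k * sin (real (Suc (Suc m)) * t) + cos t ^ k * sin (real m * t)) / 2"
        by (simp add: distrib_left add_divide_distrib)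
      then show ?thesis by (simp add: algebra_simps)
    qed
    have int: "integrable lborel (\<lambda>x. E x * (cos (pi*x/R0) ^ k * sin (real j * (pi*x/R0))))" for j
      by (rule integrable_mult_bounded[OF E, where K=1])
         (auto simp: abs_mult power_abs intro!: mult_le_one power_le_one)
    have "(\<integral>x. E x * (cos (pi*x/R0) ^ Suc k * sin (real n * (pi*x/R0))) \<partial>lborel)
       = (\<integral>x. (E x * (cos (pi*x/R0) ^ k * sin (real (Suc (Suc m)) * (pi*x/R0))) +
              E x * (cos (pi*x/R0) ^ k * sin (real m * (pi*x/R0)))) / 2 \<partial>lborel)"
      unfolding product by (simp add: algebra_simps add_divide_distrib)
    also have "\<dots> = ((\<integral>x. E x * (cos (pi*x/R0) ^ k * sin (real (Suc (Suc m)) * (pi*x/R0))) \<partial>lborel) +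
          (\<integral>x. E x * (cos (pi*x/R0) ^ k * sin (real m * (pi*x/R0))) \<partial>lborel)) / 2"
      by (simp only: integral_divide_zero Bochner_Integration.integral_add[OF int int])
    finally show ?thesis by (simp only: Suc.IH) simp
  qed simp
qed

lemma integral_sin_poly_cos_eq_0:
  fixes E :: "real \<Rightarrow> real"
  assumes E: "integrable lborel E"
    and sin_moments: "\<And>n. n \<ge> 1 \<Longrightarrow> (\<integral>x. E x * sin (real n * (pi*x/R0)) \<partial>lborel) = 0"
    and p: "real_polynomial_function p"
  shows "(\<integral>x. E x * (sin (pi*x/R0) * p (cos (pi*x/R0))) \<partial>lborel) = 0"
proof -
  obtain c N where p_eq: "p = (\<lambda>y. \<Sum>i\<le>N. c i * y ^ i)"
    using p real_polynomial_function_iff_sum by blast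
  have int: "integrable lborel (\<lambda>x. E x * (cos (pi*x/R0) ^ i * sin (real 1 * (pi*x/R0))))" for i
    by (rule integrable_mult_bounded[OF E, where K=1])
       (auto simp: abs_mult power_abs intro!: mult_le_one power_le_one)
  have "(\<integral>x. E x * (sin (pi*x/R0) * p (cos (pi*x/R0))) \<partial>lborel)
     = (\<integral>x. (\<Sum>i\<le>N. c i * (E x * (cos (pi*x/R0) ^ i * sin (real 1 * (pi*x/R0))))) \<partial>lborel)"
    unfolding p_eq by (simp add: sum_distrib_left algebra_simps)
  also have "\<dots> = (\<Sum>i\<le>N. c i * (\<integral>x. E x * (cos (pi*x/R0) ^ i * sin (real 1 * (pi*x/R0))) \<partial>lborel))"
    using int by (simp add: integral_sum)
  also have "\<dots> = 0"
    by (simp only: integral_cos_power_sin_eq_0[OF E sin_moments]) simp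
  finally show ?thesis .
qed

lemma abs_integral_mult_le:
  fixes E u :: "real \<Rightarrow> real"
  assumes E: "integrable lborel E" and u: "u \<in> borel_measurable borel"
    and bound: "\<And>x. E x \<noteq> 0 \<Longrightarrow> \<bar>u x\<bar> \<le> \<epsilon>"
  shows "\<bar>\<integral>x. E x * u x \<partial>lborel\<bar> \<le> \<epsilon> * (\<integral>x. \<bar>E x\<bar> \<partial>lborel)"
proof -
  have "\<bar>\<integral>x. E x * u x \<partial>lborel\<bar> \<le> (\<integral>x. \<epsilon> * \<bar>E x\<bar> \<partial>lborel)"
  proof (rule integral_abs_bound_integral)
    show "integrable lborel (\<lambda>x. E x * u x)" by (rule integrable_mult_bounded[OF E u bound])
    show "integrable lborel (\<lambda>x. \<epsilon> * \<bar>E x\<bar>)" using E by simp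
    show "\<bar>E x * u x\<bar> \<le> \<epsilon> * \<bar>E x\<bar>" for x
      using bound[of x] mult_left_mono[of "\<bar>u x\<bar>" \<epsilon> "\<bar>E x\<bar>"]
      by (cases "E x = 0") (simp_all add: abs_mult mult.commute)
  qed
  then show ?thesis by simp
qed

lemma eq_0_if_abs_le_epsilon_mult:
  fixes x A :: real
  assumes "\<And>\<epsilon>. \<epsilon> > 0 \<Longrightarrow> \<bar>x\<bar> \<le> \<epsilon> * A"
  shows "x = 0"
proof -
  have "\<bar>x\<bar> \<le> 0 + \<delta>" if "\<delta> > 0" for \<delta>
  proof -
    have "\<bar>x\<bar> \<le> \<delta> / (\<bar>A\<bar> + 1) * A" using that by (intro assms) simp
    also have "\<dots> \<le> \<delta> / (\<bar>A\<bar> + 1) * (\<bar>A\<bar> + 1)" using that by (intro mult_left_mono) simp_all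
    also have "\<dots> = \<delta>" by simp
    finally show ?thesis by simp
  qed
  then show ?thesis using field_le_epsilon[of "\<bar>x\<bar>" 0] by simp
qed

lemma continuous_on_eq_comp_cos:
  assumes R0: "R0 > 0" and q: "continuous_on {0..R0} q"
  obtains g where "continuous_on {-1..1} g" "\<And>x. x \<in> {0..R0} \<Longrightarrow> q x = g (cos (pi*x/R0))"
proof
  show "continuous_on {-1..1} (\<lambda>y. q (R0/pi * arccos y))"
    using R0 arccos_lbound arccos_ubound
    by (intro continuous_on_compose2[OF q] continuous_intros) (auto simp: field_simps)
  show "q x = q (R0/pi * arccos (cos (pi*x/R0)))" if "x \<in> {0..R0}" for x
    using that R0 by (subst arccos_cos) (auto simp: field_simps)
qed

text \<open>On \<open>[0, R0]\<close> a continuous \<open>q\<close> is a continuous function of \<open>cos (\<pi> x / R0)\<close>,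
  which Weierstrass approximates uniformly by polynomials.\<close>
lemma integral_sin_continuous_eq_0:
  fixes E q :: "real \<Rightarrow> real"
  assumes R0: "R0 > 0" and E: "integrable lborel E"
    and E_outside: "\<And>x. x \<notin> {0..R0} \<Longrightarrow> E x = 0"
    and sin_moments: "\<And>n. n \<ge> 1 \<Longrightarrow> (\<integral>x. E x * sin (real n * (pi*x/R0)) \<partial>lborel) = 0"
    and q: "continuous_on UNIV q"
  shows "(\<integral>x. E x * (sin (pi*x/R0) * q x) \<partial>lborel) = 0"
proof (rule eq_0_if_abs_le_epsilon_mult)
  fix \<epsilon> :: real assume "\<epsilon> > 0"
  obtain g where g: "continuous_on {-1..1} g" and q_eq: "\<And>x. x \<in> {0..R0} \<Longrightarrow> q x = g (cos (pi*x/R0))"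
    using continuous_on_eq_comp_cos[OF R0 continuous_on_subset[OF q]] by blast
  obtain p where p: "real_polynomial_function p" "\<And>y. y \<in> {-1..1} \<Longrightarrow> \<bar>g y - p y\<bar> < \<epsilon>"
    using Stone_Weierstrass_real_polynomial_function[OF compact_Icc g \<open>\<epsilon> > 0\<close>] by blast
  have p_cont: "continuous_on S p" for S
    using p(1) by (simp add: real_polynomial_function_eq continuous_on_polymonial_function)
  obtain Kp where Kp: "\<And>y. y \<in> {-1..1} \<Longrightarrow> \<bar>p y\<bar> \<le> Kp"
    using compact_imp_bounded[OF compact_continuous_image[OF p_cont compact_Icc]]
    unfolding bounded_real by (metis image_eqI)
  have [measurable]: "q \<in> borel_measurable borel" "p \<in> borel_measurable borel"
    using q p_cont by (simp_all add: borel_measurable_continuous_onI)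
  let ?d = "\<lambda>x. sin (pi*x/R0) * (q x - p (cos (pi*x/R0)))"
  have d_bound: "\<bar>?d x\<bar> \<le> \<epsilon>" if "E x \<noteq> 0" for x
  proof -
    have "x \<in> {0..R0}" using that E_outside by blast
    then have "\<bar>q x - p (cos (pi*x/R0))\<bar> \<le> \<epsilon>" using p(2)[of "cos (pi*x/R0)"] q_eq by simp
    then show ?thesis by (rule abs_sin_mult_le)
  qed
  have "integrable lborel (\<lambda>x. E x * ?d x)"
    using d_bound by (intro integrable_mult_bounded[OF E]) simp_all
  moreover have "integrable lborel (\<lambda>x. E x * (sin (pi*x/R0) * p (cos (pi*x/R0))))"
    using Kp by (intro integrable_mult_bounded[OF E, where K=Kp] abs_sin_mult_le) simp_all
  moreover have "(\<lambda>x. E x * (sin (pi*x/R0) * q x)) =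
      (\<lambda>x. E x * ?d x + E x * (sin (pi*x/R0) * p (cos (pi*x/R0))))"
    by (simp add: fun_eq_iff algebra_simps)
  ultimately have "(\<integral>x. E x * (sin (pi*x/R0) * q x) \<partial>lborel) = (\<integral>x. E x * ?d x \<partial>lborel)"
    using integral_sin_poly_cos_eq_0[OF E sin_moments p(1)] by simp
  also have "\<bar>\<dots>\<bar> \<le> \<epsilon> * (\<integral>x. \<bar>E x\<bar> \<partial>lborel)"
    using d_bound by (intro abs_integral_mult_le[OF E]) simp_all
  finally show "\<bar>\<integral>x. E x * (sin (pi*x/R0) * q x) \<partial>lborel\<bar> \<le> \<epsilon> * (\<integral>x. \<bar>E x\<bar> \<partial>lborel)" .
qed

lemma ramp_tendsto_indicator:
  fixes c x :: real
  shows "(\<lambda>j. max 0 (min 1 (real j * (x - c)))) \<longlonglongrightarrow> indicator {c<..} x"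
proof (cases "x \<le> c")
  case True
  have "max 0 (min 1 (real j * (x - c))) = 0" for j
  proof -
    have "real j * (x - c) \<le> 0" using True by (simp add: mult_nonneg_nonpos)
    then show ?thesis by simp
  qed
  then show ?thesis using True by (simp add: indicator_def)
next
  case False
  obtain N where N: "1 < real N * (x - c)" using reals_Archimedean3[of "x - c"] False by auto
  have "max 0 (min 1 (real j * (x - c))) = indicator {c<..} x" if "N \<le> j" for j
  proof -
    have "real N * (x - c) \<le> real j * (x - c)" using that False by (intro mult_right_mono) auto
    then have "1 < real j * (x - c)" using N by linarith
    then show ?thesis using False by (simp add: indicator_def)
  qed
  then show ?thesis by (intro tendsto_eventually) (auto simp: eventually_sequentially)
qed

text \<open>Dominated convergence along continuous ramps increasing to the indicator.\<close>
lemma integral_sin_halfline_eq_0: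
  fixes E :: "real \<Rightarrow> real"
  assumes R0: "R0 > 0" and E: "integrable lborel E"
    and E_outside: "\<And>x. x \<notin> {0..R0} \<Longrightarrow> E x = 0"
    and sin_moments: "\<And>n. n \<ge> 1 \<Longrightarrow> (\<integral>x. E x * sin (real n * (pi*x/R0)) \<partial>lborel) = 0"
  shows "(\<integral>x. E x * (sin (pi*x/R0) * indicator {c<..} x) \<partial>lborel) = 0"
proof -
  define ramp where "ramp j x = max 0 (min 1 (real j * (x - c)))" for j :: nat and x :: real
  have ramp_cont: "continuous_on UNIV (ramp j)" for j unfolding ramp_def by (intro continuous_intros)
  have "(\<lambda>j. \<integral>x. E x * (sin (pi*x/R0) * ramp j x) \<partial>lborel) \<longlonglongrightarrow>
        (\<integral>x. E x * (sin (pi*x/R0) * indicator {c<..} x) \<partial>lborel)"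
  proof (rule integral_dominated_convergence[where w="\<lambda>x. \<bar>E x\<bar>"])
    show "(\<lambda>x. E x * (sin (pi*x/R0) * indicator {c<..} x)) \<in> borel_measurable lborel"
      using E by measurable
    show "(\<lambda>x. E x * (sin (pi*x/R0) * ramp j x)) \<in> borel_measurable lborel" for j
      using E borel_measurable_continuous_onI[OF ramp_cont[of j]] by measurable
    show "integrable lborel (\<lambda>x. \<bar>E x\<bar>)" using E by simp
    have "\<bar>sin (pi*x/R0) * ramp j x\<bar> * \<bar>E x\<bar> \<le> 1 * \<bar>E x\<bar>" for j x
      by (intro mult_right_mono abs_sin_mult_le) (auto simp: ramp_def)
    then show "AE x in lborel. norm (E x * (sin (pi*x/R0) * ramp j x)) \<le> \<bar>E x\<bar>" for j
      by (simp add: abs_mult mult_ac)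
    show "AE x in lborel. (\<lambda>j. E x * (sin (pi*x/R0) * ramp j x)) \<longlonglongrightarrow>
        E x * (sin (pi*x/R0) * indicator {c<..} x)"
      unfolding ramp_def by (intro AE_I2 tendsto_intros ramp_tendsto_indicator)
  qed
  moreover have "(\<integral>x. E x * (sin (pi*x/R0) * ramp j x) \<partial>lborel) = 0" for j
    by (rule integral_sin_continuous_eq_0[OF R0 E E_outside sin_moments ramp_cont])
  ultimately have "(\<lambda>j. 0) \<longlonglongrightarrow> (\<integral>x. E x * (sin (pi*x/R0) * indicator {c<..} x) \<partial>lborel)"
    by simp
  then show ?thesis by (simp add: LIMSEQ_const_iff)
qed

lemma emeasure_density_eq_integral:
  fixes F :: "real \<Rightarrow> real"
  assumes A: "A \<in> sets borel" and F [measurable]: "F \<in> borel_measurable borel"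
    and nonneg: "\<And>x. F x \<ge> 0" and int: "integrable lborel (\<lambda>x. F x * indicator A x)"
  shows "emeasure (density lborel F) A = ennreal (\<integral>x. F x * indicator A x \<partial>lborel)"
proof -
  have "emeasure (density lborel F) A = (\<integral>\<^sup>+x. ennreal (F x) * indicator A x \<partial>lborel)"
    using A by (subst emeasure_density) auto
  also have "\<dots> = (\<integral>\<^sup>+x. ennreal (F x * indicator A x) \<partial>lborel)"
    by (intro nn_integral_cong) (auto simp: indicator_def)
  also have "\<dots> = ennreal (\<integral>x. F x * indicator A x \<partial>lborel)"
    using A int nonneg by (intro nn_integral_eq_integral) auto
  finally show ?thesis .
qed

text \<open>The densities of the positive and negative parts of \<open>W\<close> agree on all half-lines,
  hence are equal measures.\<close>
lemma AE_eq_0_if_integral_halflines_eq_0: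
  fixes W :: "real \<Rightarrow> real"
  assumes W: "integrable lborel W"
    and halflines: "\<And>c. (\<integral>x. W x * indicator {c<..} x \<partial>lborel) = 0"
  shows "AE x in lborel. W x = 0"
proof -
  define P where "P x = max 0 (W x)" for x
  define N where "N x = max 0 (- W x)" for x
  have [measurable]: "W \<in> borel_measurable borel" using W by simp
  have [measurable]: "P \<in> borel_measurable borel" "N \<in> borel_measurable borel"
    unfolding P_def N_def by measurable
  have P_nonneg: "P x \<ge> 0" and N_nonneg: "N x \<ge> 0" for x unfolding P_def N_def by simp_all
  have int_P: "integrable lborel (\<lambda>x. P x * indicator {c<..} x)"
    and int_N: "integrable lborel (\<lambda>x. N x * indicator {c<..} x)" for c
    unfolding P_def N_def using W by (auto intro!: integrable_real_mult_indicator)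
  have "density lborel P = density lborel N"
  proof (rule measure_eqI_lessThan)
    fix c :: real
    have "W x * indicator {c<..} x = P x * indicator {c<..} x - N x * indicator {c<..} x" for x
      unfolding P_def N_def by (auto simp: indicator_def)
    then have "(\<integral>x. W x * indicator {c<..} x \<partial>lborel)
        = (\<integral>x. P x * indicator {c<..} x \<partial>lborel) - (\<integral>x. N x * indicator {c<..} x \<partial>lborel)"
      using int_P[of c] int_N[of c] by simp
    then have "(\<integral>x. P x * indicator {c<..} x \<partial>lborel) = (\<integral>x. N x * indicator {c<..} x \<partial>lborel)"
      using halflines[of c] by simp
    then show "emeasure (density lborel P) {c<..} = emeasure (density lborel N) {c<..}"
      by (simp add: emeasure_density_eq_integral int_P int_N P_nonneg N_nonneg)
    show "emeasure (density lborel P) {c<..} < \<infinity>"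
      by (simp add: emeasure_density_eq_integral int_P P_nonneg)
  qed simp_all
  then have "AE x in lborel. ennreal (P x) = ennreal (N x)"
    by (intro sigma_finite_measure.density_unique[OF sigma_finite_lborel]) auto
  then show ?thesis
    by eventually_elim (use P_nonneg N_nonneg in \<open>auto simp: P_def N_def max_def split: if_splits\<close>)
qed

theorem sin_system_complete:
  fixes e :: "real \<Rightarrow> real"
  assumes R0: "R0 > 0" and e: "set_integrable lborel {0..R0} e"
    and sin_moments: "\<And>n. n \<ge> 1 \<Longrightarrow> (LINT x:{0..R0}|lborel. e x * sin (real n * (pi*x/R0))) = 0"
  shows "AE x in lborel. x \<in> {0..R0} \<longrightarrow> e x = 0"
proof -
  define E where "E x = indicator {0..R0} x * e x" for x
  have E: "integrable lborel E" using e unfolding set_integrable_def E_def by simp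
  have E_outside: "\<And>x. x \<notin> {0..R0} \<Longrightarrow> E x = 0" unfolding E_def by simp
  have E_moments: "(\<integral>x. E x * sin (real n * (pi*x/R0)) \<partial>lborel) = 0" if "n \<ge> 1" for n
    using sin_moments[OF that] unfolding set_lebesgue_integral_def E_def by (simp add: mult.assoc)
  have W: "integrable lborel (\<lambda>x. E x * sin (pi*x/R0))"
    by (rule integrable_mult_bounded[OF E, where K=1]) auto
  have "AE x in lborel. E x * sin (pi*x/R0) = 0"
    using integral_sin_halfline_eq_0[OF R0 E E_outside E_moments]
    by (intro AE_eq_0_if_integral_halflines_eq_0[OF W]) (simp add: mult.assoc)
  moreover have "AE x in lborel. x \<noteq> 0" "AE x in lborel. x \<noteq> R0" by (rule AE_lborel_singleton)+
  ultimately show ?thesis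
  proof eventually_elim
    case (elim x)
    show ?case
    proof
      assume x: "x \<in> {0..R0}"
      then have "0 < pi*x/R0" "pi*x/R0 < pi" using elim R0 by (auto simp: field_simps)
      then have "sin (pi*x/R0) > 0" by (rule sin_gt_zero)
      then show "e x = 0" using elim x unfolding E_def by simp
    qed
  qed
qed

lemma set_borel_measurable_mult:
  fixes f g :: "'a \<Rightarrow> real"
  assumes "set_borel_measurable M A f" "set_borel_measurable M A g"
  shows "set_borel_measurable M A (\<lambda>x. f x * g x)"
proof -
  have "(\<lambda>x. (indicator A x *\<^sub>R f x) * (indicator A x *\<^sub>R g x)) \<in> borel_measurable M"
    using assms unfolding set_borel_measurable_def by (rule borel_measurable_times)
  moreover have "(\<lambda>x. (indicator A x *\<^sub>R f x) * (indicator A x *\<^sub>R g x)) =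
      (\<lambda>x. indicator A x *\<^sub>R (f x * g x))"
    by (simp add: fun_eq_iff indicator_def)
  ultimately show ?thesis unfolding set_borel_measurable_def by simp
qed

lemma L2r_imp_set_integrable_r_mult:
  assumes f: "L2r R0 f"
  shows "set_integrable lborel {0..R0} (\<lambda>r. r * f r)"
proof (rule set_integrable_bound[where f="\<lambda>r. r^2 * (f r)^2 + 1"])
  have "set_integrable lborel {0..R0} (\<lambda>r. 1::real)"
    by (rule borel_integrable_atLeastAtMost'[OF continuous_on_const])
  then show "set_integrable lborel {0..R0} (\<lambda>r. r^2 * (f r)^2 + 1)"
    using f unfolding L2r_def by (intro set_integral_add(1)) auto
  show "set_borel_measurable lborel {0..R0} (\<lambda>r. r * f r)"
    using f unfolding L2r_def
    by (intro set_borel_measurable_mult) (auto simp: set_borel_measurable_def)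
  have abs_le: "\<bar>y\<bar> \<le> y^2 + 1" for y :: real
  proof -
    have "2 * \<bar>y\<bar> \<le> y^2 + 1"
      using zero_le_power2[of "\<bar>y\<bar> - 1"] by (simp add: power2_eq_square algebra_simps)
    then show ?thesis using abs_ge_zero[of y] by linarith
  qed
  have "norm (r * f r) \<le> norm (r^2 * (f r)^2 + 1)" for r
    using abs_le[of "r * f r"] by (simp add: power_mult_distrib)
  then show "AE r in lborel. r \<in> {0..R0} \<longrightarrow> norm (r * f r) \<le> norm (r^2 * (f r)^2 + 1)"
    by simp
qed

lemma set_integrable_mult_sin:
  assumes e: "set_integrable lborel {0..R0} e"
  shows "set_integrable lborel {0..R0} (\<lambda>r. e r * sin (real n * (pi*r/R0)))"
proof (rule set_integrable_bound[OF e])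
  have "set_borel_measurable lborel {0..R0} e"
    using e unfolding set_integrable_def set_borel_measurable_def by (rule borel_measurable_integrable)
  then show "set_borel_measurable lborel {0..R0} (\<lambda>r. e r * sin (real n * (pi*r/R0)))"
    by (rule set_borel_measurable_mult) (simp add: set_borel_measurable_def)
  show "AE r in lborel. r \<in> {0..R0} \<longrightarrow> norm (e r * sin (real n * (pi*r/R0))) \<le> norm (e r)"
    by (intro AE_I2 impI) (simp add: abs_mult mult_left_le)
qed

lemma coef_eq_sin_integral:
  assumes R0: "R0 > 0" and n: "n \<ge> 1"
  shows "coef R0 f n =
    sqrt 2 * R0 / sqrt (R0^3) * (LINT r:{0..R0}|lborel. r * f r * sin (real n * (pi*r/R0)))"
proof -
  have "r^2 * f r * omega R0 n r =
      sqrt 2 * R0 / sqrt (R0^3) * (r * f r * sin (real n * (pi*r/R0)))" for r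
  proof (cases "r = 0")
    case False
    then have "real n * pi * r / R0 \<noteq> 0" using n R0 by simp
    then show ?thesis
      unfolding omega_def Let_def using False R0 by (simp add: field_simps power2_eq_square)
  qed simp
  then show ?thesis unfolding coef_def by simp
qed

corollary AE_eq_if_coef_eq:
  assumes R0: "R0 > 0" and f: "L2r R0 f" and g: "L2r R0 g"
    and coef_eq: "\<And>n. n \<ge> 1 \<Longrightarrow> coef R0 f n = s * coef R0 g n"
  shows "AE r in lborel. r \<in> {0..R0} \<longrightarrow> f r = s * g r"
proof -
  define e where "e r = r * f r - s * (r * g r)" for r
  have int_f: "set_integrable lborel {0..R0} (\<lambda>r. r * f r)" by (rule L2r_imp_set_integrable_r_mult[OF f])
  have int_g: "set_integrable lborel {0..R0} (\<lambda>r. r * g r)" by (rule L2r_imp_set_integrable_r_mult[OF g])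
  have "AE r in lborel. r \<in> {0..R0} \<longrightarrow> e r = 0"
  proof (rule sin_system_complete[OF R0])
    show "set_integrable lborel {0..R0} e"
      unfolding e_def by (intro set_integral_diff(1) set_integrable_mult_right int_f int_g)
    fix n :: nat assume n: "n \<ge> 1"
    have int_fs: "set_integrable lborel {0..R0} (\<lambda>r. r * f r * sin (real n * (pi*r/R0)))"
      by (rule set_integrable_mult_sin[OF int_f])
    have int_gs: "set_integrable lborel {0..R0} (\<lambda>r. s * (r * g r * sin (real n * (pi*r/R0))))"
      by (rule set_integrable_mult_right, rule set_integrable_mult_sin[OF int_g])
    have "(LINT r:{0..R0}|lborel. r * f r * sin (real n * (pi*r/R0))) =
          s * (LINT r:{0..R0}|lborel. r * g r * sin (real n * (pi*r/R0)))"
      using coef_eq[OF n] R0 unfolding coef_eq_sin_integral[OF R0 n] by simp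
    then have "(LINT r:{0..R0}|lborel. r * f r * sin (real n * (pi*r/R0)) -
        s * (r * g r * sin (real n * (pi*r/R0)))) = 0"
      unfolding set_integral_diff(2)[OF int_fs int_gs] by simp
    then show "(LINT r:{0..R0}|lborel. e r * sin (real n * (pi*r/R0))) = 0"
      by (simp add: e_def algebra_simps)
  qed
  moreover have "AE r in lborel. r \<noteq> 0" by (rule AE_lborel_singleton)
  ultimately show ?thesis by eventually_elim (auto simp: e_def algebra_simps)
qed

section \<open>Square-integrable random variables\<close>

definition sq_integrable :: "'w measure \<Rightarrow> ('w \<Rightarrow> real) \<Rightarrow> bool" where
  "sq_integrable M X \<longleftrightarrow> X \<in> borel_measurable M \<and> integrable M (\<lambda>w. (X w)^2)"

definition L2_norm :: "'w measure \<Rightarrow> ('w \<Rightarrow> real) \<Rightarrow> real" where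
  "L2_norm M X = sqrt (\<integral>w. (X w)^2 \<partial>M)"

lemma sq_integrable_imp_integrable_mult:
  assumes "sq_integrable M X" "sq_integrable M Y"
  shows "integrable M (\<lambda>w. X w * Y w)"
proof (rule Bochner_Integration.integrable_bound[where f="\<lambda>w. (X w)^2 + (Y w)^2"])
  show "integrable M (\<lambda>w. (X w)^2 + (Y w)^2)" using assms unfolding sq_integrable_def by simp
  show "(\<lambda>w. X w * Y w) \<in> borel_measurable M"
    using assms unfolding sq_integrable_def by (intro borel_measurable_times) auto
  have "\<bar>x * y\<bar> \<le> x^2 + y^2" for x y :: real
  proof -
    have "2 * \<bar>x * y\<bar> \<le> x^2 + y^2"
      using zero_le_power2[of "\<bar>x\<bar> - \<bar>y\<bar>"] by (simp add: power2_eq_square algebra_simps abs_mult)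
    then show ?thesis using abs_ge_zero[of "x * y"] by linarith
  qed
  then show "AE w in M. norm (X w * Y w) \<le> norm ((X w)^2 + (Y w)^2)" by simp
qed

lemma sq_integrable_abs: "sq_integrable M X \<Longrightarrow> sq_integrable M (\<lambda>w. \<bar>X w\<bar>)"
  unfolding sq_integrable_def by auto

lemma sq_integrable_cmult: "sq_integrable M X \<Longrightarrow> sq_integrable M (\<lambda>w. c * X w)"
  unfolding sq_integrable_def by (auto simp: power_mult_distrib)

lemma sq_integrable_add:
  assumes "sq_integrable M X" "sq_integrable M Y"
  shows "sq_integrable M (\<lambda>w. X w + Y w)"
proof -
  have "integrable M (\<lambda>w. (X w)^2 + 2 * (X w * Y w) + (Y w)^2)"
    using assms sq_integrable_imp_integrable_mult[OF assms] unfolding sq_integrable_def by simp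
  then show ?thesis
    using assms unfolding sq_integrable_def by (simp add: power2_sum algebra_simps borel_measurable_add)
qed

lemma sq_integrable_diff:
  assumes "sq_integrable M X" "sq_integrable M Y"
  shows "sq_integrable M (\<lambda>w. X w - Y w)"
  using sq_integrable_add[OF assms(1) sq_integrable_cmult[OF assms(2), of "-1"]] by simp

lemma sq_integrable_sum:
  "finite I \<Longrightarrow> (\<And>i. i \<in> I \<Longrightarrow> sq_integrable M (X i)) \<Longrightarrow> sq_integrable M (\<lambda>w. \<Sum>i\<in>I. X i w)"
proof (induction I rule: finite_induct)
  case empty
  then show ?case by (simp add: sq_integrable_def)
qed (simp add: sq_integrable_add)

lemma integral_square_add_scaled:
  assumes "sq_integrable M X" "sq_integrable M Y"
  shows "(\<integral>w. (X w + t * Y w)^2 \<partial>M) =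
    (\<integral>w. (X w)^2 \<partial>M) + 2 * t * (\<integral>w. X w * Y w \<partial>M) + t^2 * (\<integral>w. (Y w)^2 \<partial>M)"
proof -
  have "(\<lambda>w. (X w + t * Y w)^2) = (\<lambda>w. (X w)^2 + (2 * t) * (X w * Y w) + t^2 * (Y w)^2)"
    by (simp add: fun_eq_iff power2_eq_square algebra_simps)
  then show ?thesis
    using assms sq_integrable_imp_integrable_mult[OF assms] unfolding sq_integrable_def by simp
qed

lemma L2_norm_nonneg: "L2_norm M X \<ge> 0"
  unfolding L2_norm_def by simp

lemma L2_norm_square: "(L2_norm M X)^2 = (\<integral>w. (X w)^2 \<partial>M)"
  unfolding L2_norm_def by simp

lemma L2_norm_cmult: "L2_norm M (\<lambda>w. c * X w) = \<bar>c\<bar> * L2_norm M X"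
  unfolding L2_norm_def by (simp add: power_mult_distrib real_sqrt_mult)

lemma L2_norm_abs: "L2_norm M (\<lambda>w. \<bar>X w\<bar>) = L2_norm M X"
  unfolding L2_norm_def by simp

text \<open>The quadratic \<open>t \<mapsto> E[(X + tY)\<^sup>2]\<close> is nonnegative, so its discriminant is not positive.\<close>
lemma Cauchy_Schwarz_integral:
  assumes X: "sq_integrable M X" and Y: "sq_integrable M Y"
  shows "\<bar>\<integral>w. X w * Y w \<partial>M\<bar> \<le> L2_norm M X * L2_norm M Y"
proof -
  define a where "a = (\<integral>w. (X w)^2 \<partial>M)"
  define b where "b = (\<integral>w. (Y w)^2 \<partial>M)"
  define c where "c = (\<integral>w. X w * Y w \<partial>M)"
  have quadratic: "0 \<le> a + 2 * t * c + t^2 * b" for t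
    using integral_square_add_scaled[OF X Y, of t] Bochner_Integration.integral_nonneg[of M "\<lambda>w. (X w + t * Y w)^2"]
    by (simp add: a_def b_def c_def)
  have "b \<ge> 0" unfolding b_def by simp
  have "c^2 \<le> a * b"
  proof (cases "b = 0")
    case True
    have "c = 0"
    proof (rule ccontr)
      assume "c \<noteq> 0"
      then have "a + 2 * (- (a+1) / (2*c)) * c = -1" by (simp add: field_simps)
      then show False using quadratic[of "- (a+1) / (2*c)"] True by simp
    qed
    then show ?thesis using True by simp
  next
    case False
    then have "b > 0" using \<open>b \<ge> 0\<close> by simp
    have "0 \<le> a + 2 * (- c / b) * c + (- c / b)^2 * b" by (rule quadratic)
    also have "\<dots> = a - c^2 / b" using \<open>b > 0\<close> by (simp add: field_simps power2_eq_square)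
    finally show ?thesis using \<open>b > 0\<close> by (simp add: field_simps)
  qed
  then have "sqrt (c^2) \<le> sqrt (a * b)" by (rule real_sqrt_le_mono)
  then show ?thesis unfolding L2_norm_def a_def b_def c_def by (simp add: real_sqrt_mult)
qed

lemma L2_norm_triangle:
  assumes X: "sq_integrable M X" and Y: "sq_integrable M Y"
  shows "L2_norm M (\<lambda>w. X w + Y w) \<le> L2_norm M X + L2_norm M Y"
proof -
  have "(L2_norm M (\<lambda>w. X w + Y w))^2 = (L2_norm M X)^2 + 2 * (\<integral>w. X w * Y w \<partial>M) + (L2_norm M Y)^2"
    unfolding L2_norm_square using integral_square_add_scaled[OF X Y, of 1] by simp
  also have "\<dots> \<le> (L2_norm M X + L2_norm M Y)^2"
    using Cauchy_Schwarz_integral[OF X Y] by (simp add: power2_sum)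
  finally show ?thesis
    using L2_norm_nonneg by (meson add_nonneg_nonneg power2_le_imp_le)
qed

lemma L2_norm_diff_le:
  assumes "sq_integrable M X" "sq_integrable M Y"
  shows "L2_norm M (\<lambda>w. X w - Y w) \<le> L2_norm M X + L2_norm M Y"
  using L2_norm_triangle[OF assms(1) sq_integrable_cmult[OF assms(2), of "-1"]]
    L2_norm_cmult[of M "-1" Y] by simp

lemma L2_norm_sum_le:
  "finite I \<Longrightarrow> (\<And>i. i \<in> I \<Longrightarrow> sq_integrable M (X i)) \<Longrightarrow>
    L2_norm M (\<lambda>w. \<Sum>i\<in>I. X i w) \<le> (\<Sum>i\<in>I. L2_norm M (X i))"
proof (induction I rule: finite_induct)
  case empty
  then show ?case by (simp add: L2_norm_def)
next
  case (insert x F)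
  then have "L2_norm M (\<lambda>w. X x w + (\<Sum>i\<in>F. X i w)) \<le> L2_norm M (X x) + L2_norm M (\<lambda>w. \<Sum>i\<in>F. X i w)"
    by (intro L2_norm_triangle sq_integrable_sum) auto
  with insert show ?case by simp
qed

lemma nn_integral_square_eq_L2_norm:
  "sq_integrable M X \<Longrightarrow> (\<integral>\<^sup>+w. ennreal ((X w)^2) \<partial>M) = ennreal ((L2_norm M X)^2)"
  unfolding L2_norm_square sq_integrable_def by (intro nn_integral_eq_integral) auto

lemma abs_integral_mult_diff_le:
  assumes S: "sq_integrable M S" and T: "sq_integrable M T"
    and X: "sq_integrable M X" and Y: "sq_integrable M Y"
  shows "\<bar>(\<integral>w. S w * T w \<partial>M) - (\<integral>w. X w * Y w \<partial>M)\<bar>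
    \<le> L2_norm M (\<lambda>w. S w - X w) * (L2_norm M Y + L2_norm M (\<lambda>w. T w - Y w))
      + L2_norm M X * L2_norm M (\<lambda>w. T w - Y w)"
proof -
  have SX: "sq_integrable M (\<lambda>w. S w - X w)" and TY: "sq_integrable M (\<lambda>w. T w - Y w)"
    by (rule sq_integrable_diff[OF S X], rule sq_integrable_diff[OF T Y])
  note int = sq_integrable_imp_integrable_mult[OF S T] sq_integrable_imp_integrable_mult[OF X T]
    sq_integrable_imp_integrable_mult[OF X Y]
  have "(\<lambda>w. (S w - X w) * T w) = (\<lambda>w. S w * T w - X w * T w)"
    and "(\<lambda>w. X w * (T w - Y w)) = (\<lambda>w. X w * T w - X w * Y w)"
    by (simp_all add: fun_eq_iff algebra_simps)
  then have "(\<integral>w. S w * T w \<partial>M) - (\<integral>w. X w * Y w \<partial>M) =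
      (\<integral>w. (S w - X w) * T w \<partial>M) + (\<integral>w. X w * (T w - Y w) \<partial>M)"
    using Bochner_Integration.integral_diff[OF int(1,2)] Bochner_Integration.integral_diff[OF int(2,3)]
    by simp
  moreover have "L2_norm M T \<le> L2_norm M Y + L2_norm M (\<lambda>w. T w - Y w)"
    using L2_norm_triangle[OF Y TY] by simp
  then have "\<bar>\<integral>w. (S w - X w) * T w \<partial>M\<bar> \<le> L2_norm M (\<lambda>w. S w - X w) * (L2_norm M Y + L2_norm M (\<lambda>w. T w - Y w))"
    using Cauchy_Schwarz_integral[OF SX T] L2_norm_nonneg[of M "\<lambda>w. S w - X w"]
    by (meson mult_left_mono order_trans)
  moreover have "\<bar>\<integral>w. X w * (T w - Y w) \<partial>M\<bar> \<le> L2_norm M X * L2_norm M (\<lambda>w. T w - Y w)"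
    by (rule Cauchy_Schwarz_integral[OF X TY])
  ultimately show ?thesis by linarith
qed

lemma tendsto_integral_mult_L2:
  assumes S: "\<And>k. sq_integrable M (S k)" and T: "\<And>k. sq_integrable M (T k)"
    and X: "sq_integrable M X" and Y: "sq_integrable M Y"
    and SX: "(\<lambda>k. L2_norm M (\<lambda>w. S k w - X w)) \<longlonglongrightarrow> 0"
    and TY: "(\<lambda>k. L2_norm M (\<lambda>w. T k w - Y w)) \<longlonglongrightarrow> 0"
  shows "(\<lambda>k. \<integral>w. S k w * T k w \<partial>M) \<longlonglongrightarrow> (\<integral>w. X w * Y w \<partial>M)"
proof -
  define c where "c k = L2_norm M (\<lambda>w. S k w - X w) * (L2_norm M Y + L2_norm M (\<lambda>w. T k w - Y w))
      + L2_norm M X * L2_norm M (\<lambda>w. T k w - Y w)" for k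
  have "c \<longlonglongrightarrow> 0 * (L2_norm M Y + 0) + L2_norm M X * 0"
    using SX TY unfolding c_def by (intro tendsto_intros)
  then have "c \<longlonglongrightarrow> 0" by simp
  have "(\<lambda>k. (\<integral>w. S k w * T k w \<partial>M) - (\<integral>w. X w * Y w \<partial>M)) \<longlonglongrightarrow> 0"
  proof (rule Lim_null_comparison)
    show "eventually (\<lambda>k. norm ((\<integral>w. S k w * T k w \<partial>M) - (\<integral>w. X w * Y w \<partial>M)) \<le> c k) sequentially"
      unfolding c_def using abs_integral_mult_diff_le[OF S T X Y] by simp
  qed fact
  then show ?thesis by (rule LIM_zero_cancel)
qed

lemma integral_sum_mult_sum:
  assumes "finite I" and Y: "\<And>i. i \<in> I \<Longrightarrow> sq_integrable M (Y i)"
  shows "(\<integral>w. (\<Sum>i\<in>I. a i * Y i w) * (\<Sum>j\<in>I. b j * Y j w) \<partial>M) =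
    (\<Sum>i\<in>I. \<Sum>j\<in>I. a i * b j * (\<integral>w. Y i w * Y j w \<partial>M))"
proof -
  have int: "integrable M (\<lambda>w. a i * b j * (Y i w * Y j w))" if "i \<in> I" "j \<in> I" for i j
    using that by (intro integrable_mult_right sq_integrable_imp_integrable_mult Y)
  have "(\<integral>w. (\<Sum>i\<in>I. a i * Y i w) * (\<Sum>j\<in>I. b j * Y j w) \<partial>M) =
      (\<integral>w. (\<Sum>i\<in>I. \<Sum>j\<in>I. a i * b j * (Y i w * Y j w)) \<partial>M)"
    by (simp add: sum_product mult_ac)
  also have "\<dots> = (\<Sum>i\<in>I. \<Sum>j\<in>I. \<integral>w. a i * b j * (Y i w * Y j w) \<partial>M)"
    using int by (simp add: Bochner_Integration.integral_sum Bochner_Integration.integrable_sum)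
  finally show ?thesis by simp
qed

lemma nn_integral_square_diff_le_if_AE_limit:
  assumes [measurable]: "\<And>i. s i \<in> borel_measurable M" "Y \<in> borel_measurable M"
    and lim: "AE w in M. (\<lambda>i. s i w) \<longlonglongrightarrow> X w"
    and bound: "eventually (\<lambda>i. (\<integral>\<^sup>+w. ennreal ((Y w - s i w)^2) \<partial>M) \<le> e) sequentially"
  shows "(\<integral>\<^sup>+w. ennreal ((Y w - X w)^2) \<partial>M) \<le> e"
proof -
  have "(\<integral>\<^sup>+w. ennreal ((Y w - X w)^2) \<partial>M) = (\<integral>\<^sup>+w. liminf (\<lambda>i. ennreal ((Y w - s i w)^2)) \<partial>M)"
    using lim
  proof (intro nn_integral_cong_AE, eventually_elim)
    case (elim w)
    then have "(\<lambda>i. ennreal ((Y w - s i w)^2)) \<longlonglongrightarrow> ennreal ((Y w - X w)^2)"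
      by (intro tendsto_ennrealI tendsto_intros)
    from lim_imp_Liminf[OF trivial_limit_sequentially this] show ?case by simp
  qed
  also have "\<dots> \<le> liminf (\<lambda>i. \<integral>\<^sup>+w. ennreal ((Y w - s i w)^2) \<partial>M)"
    by (rule nn_integral_liminf) measurable
  also have "\<dots> \<le> limsup (\<lambda>i. \<integral>\<^sup>+w. ennreal ((Y w - s i w)^2) \<partial>M)"
    by (rule Liminf_le_Limsup) simp
  also have "\<dots> \<le> e"
    by (rule Limsup_bounded[OF bound])
  finally show ?thesis .
qed

context prob_space
begin

lemma sq_integrable_const [simp]: "sq_integrable M (\<lambda>w. c)"
  unfolding sq_integrable_def by simp

lemma sq_integrable_imp_integrable: "sq_integrable M X \<Longrightarrow> integrable M X"
  unfolding sq_integrable_def by (blast intro: square_integrable_imp_integrable)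

lemma abs_integral_le_L2_norm: "sq_integrable M X \<Longrightarrow> \<bar>\<integral>w. X w \<partial>M\<bar> \<le> L2_norm M X"
  using Cauchy_Schwarz_integral[of M X "\<lambda>_. 1"] by (simp add: L2_norm_def prob_space)

lemma integral_affine_centered:
  fixes X :: "'a \<Rightarrow> real"
  assumes "integrable M X" "expectation X = 0"
  shows "expectation (\<lambda>w. a + b * X w) = a"
proof -
  have "integrable M (\<lambda>w. b * X w)" using assms(1) by simp
  then show ?thesis using assms by (simp add: Bochner_Integration.integral_add prob_space)
qed

lemma covariance_affine_centered:
  assumes X: "sq_integrable M X" "expectation X = 0" and Y: "sq_integrable M Y" "expectation Y = 0"
  shows "covariance M (\<lambda>w. a + b * X w) (\<lambda>w. c + d * Y w) = b * d * expectation (\<lambda>w. X w * Y w)"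
proof -
  have "expectation (\<lambda>w. a + b * X w) = a" "expectation (\<lambda>w. c + d * Y w) = c"
    by (rule integral_affine_centered[OF sq_integrable_imp_integrable[OF X(1)] X(2)],
        rule integral_affine_centered[OF sq_integrable_imp_integrable[OF Y(1)] Y(2)])
  then show ?thesis unfolding covariance_def by (simp add: mult_ac)
qed

lemma sq_integrable_Cauchy_AE_convergent_subseq:
  fixes s :: "nat \<Rightarrow> 'a \<Rightarrow> real"
  assumes sq: "\<And>n. sq_integrable M (s n)"
    and Cauchy: "\<And>e. e > 0 \<Longrightarrow> \<exists>N. \<forall>i\<ge>N. \<forall>j\<ge>N. L2_norm M (\<lambda>w. s i w - s j w) < e"
  obtains r X where "strict_mono r" "X \<in> borel_measurable M" "AE w in M. (\<lambda>i. s (r i) w) \<longlonglongrightarrow> X w"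
proof -
  have [measurable]: "s n \<in> borel_measurable M" for n using sq unfolding sq_integrable_def by blast
  have "(LINT w|M. norm (s i w - s j w)) \<le> L2_norm M (\<lambda>w. s i w - s j w)" for i j
    using abs_integral_le_L2_norm[OF sq_integrable_abs[OF sq_integrable_diff[OF sq sq]]]
    by (simp add: L2_norm_abs)
  then have "\<exists>N. \<forall>i\<ge>N. \<forall>j\<ge>N. (LINT w|M. norm (s i w - s j w)) < e" if "e > 0" for e
    using Cauchy[OF that] by (meson le_less_trans)
  then obtain r where r: "strict_mono r" "AE w in M. Cauchy (\<lambda>i. s (r i) w)"
    using cauchy_L1_AE_cauchy_subseq[where s=s and M=M] sq_integrable_imp_integrable[OF sq] by blast
  define X where "X w = lim (\<lambda>i. s (r i) w)" for w
  have "X \<in> borel_measurable M" unfolding X_def by measurable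
  moreover have "AE w in M. (\<lambda>i. s (r i) w) \<longlonglongrightarrow> X w"
    using r(2) by eventually_elim (simp add: X_def Cauchy_convergent_iff convergent_LIMSEQ_iff)
  ultimately show ?thesis using r(1) that by blast
qed

text \<open>Completeness of \<open>L\<^sup>2\<close>, in the form used to define the Wiener integral: the limit
  of an a.e. convergent subsequence is an \<open>L\<^sup>2\<close> limit of the whole sequence by Fatou's lemma.\<close>
lemma sq_integrable_Cauchy_converges:
  fixes s :: "nat \<Rightarrow> 'a \<Rightarrow> real"
  assumes sq: "\<And>n. sq_integrable M (s n)"
    and Cauchy: "\<And>e. e > 0 \<Longrightarrow> \<exists>N. \<forall>i\<ge>N. \<forall>j\<ge>N. L2_norm M (\<lambda>w. s i w - s j w) < e"
  shows "\<exists>X. X \<in> borel_measurable M \<and> (\<lambda>k. \<integral>\<^sup>+w. ennreal ((s k w - X w)^2) \<partial>M) \<longlonglongrightarrow> 0"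
proof -
  obtain r X where r: "strict_mono r" and X: "X \<in> borel_measurable M"
    and lim: "AE w in M. (\<lambda>i. s (r i) w) \<longlonglongrightarrow> X w"
    using sq_integrable_Cauchy_AE_convergent_subseq[OF sq Cauchy] by blast
  have [measurable]: "s n \<in> borel_measurable M" for n using sq unfolding sq_integrable_def by blast
  have "limsup (\<lambda>k. \<integral>\<^sup>+w. ennreal ((s k w - X w)^2) \<partial>M) \<le> ennreal e" if e: "e > 0" for e
  proof -
    obtain N where N: "\<forall>i\<ge>N. \<forall>j\<ge>N. L2_norm M (\<lambda>w. s i w - s j w) < sqrt e"
      using Cauchy[of "sqrt e"] e by auto
    have pair_bound: "(\<integral>\<^sup>+w. ennreal ((s k w - s j w)^2) \<partial>M) \<le> ennreal e" if "k \<ge> N" "j \<ge> N" for k j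
    proof -
      have "(L2_norm M (\<lambda>w. s k w - s j w))^2 \<le> (sqrt e)^2"
        using N that L2_norm_nonneg by (intro power_mono) (auto intro: less_imp_le)
      then show ?thesis
        using e by (simp add: nn_integral_square_eq_L2_norm sq_integrable_diff sq)
    qed
    have "(\<integral>\<^sup>+w. ennreal ((s k w - X w)^2) \<partial>M) \<le> ennreal e" if "k \<ge> N" for k
    proof (rule nn_integral_square_diff_le_if_AE_limit[OF _ _ lim])
      show "eventually (\<lambda>i. (\<integral>\<^sup>+w. ennreal ((s k w - s (r i) w)^2) \<partial>M) \<le> ennreal e) sequentially"
        using seq_suble[OF r] pair_bound[OF that]
        by (intro eventually_sequentiallyI[of N]) (meson order_trans)
    qed simp_all
    then show ?thesis by (intro Limsup_bounded eventually_sequentiallyI)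
  qed
  then have "limsup (\<lambda>k. \<integral>\<^sup>+w. ennreal ((s k w - X w)^2) \<partial>M) = 0"
    using ennreal_le_epsilon[of 0] by simp
  then show ?thesis using X tendsto_0_if_Limsup_eq_0_ennreal by blast
qed

end

section \<open>Fractional Brownian motion\<close>

definition fbm_cov :: "real \<Rightarrow> real \<Rightarrow> real \<Rightarrow> real" where
  "fbm_cov H t s = (t powr (2*H) + s powr (2*H) - \<bar>t - s\<bar> powr (2*H)) / 2"

lemma fbm_prob_space: "fbm M H B \<Longrightarrow> prob_space M"
  unfolding fbm_def by blast

lemma fbm_Hurst_pos: "fbm M H B \<Longrightarrow> 0 < H"
  unfolding fbm_def by blast

lemma fbm_integral_mult:
  assumes "fbm M H B" "t \<ge> 0" "s \<ge> 0"
  shows "(\<integral>w. B t w * B s w \<partial>M) = fbm_cov H t s"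
proof -
  have "\<forall>s\<ge>0. \<forall>t\<ge>0. integral\<^sup>L M (\<lambda>w. B t w * B s w) = fbm_cov H t s"
    using assms(1) unfolding fbm_def fbm_cov_def by (elim conjE) blast
  then show ?thesis using assms(2,3) by blast
qed

lemma fbm_sq_integrable:
  assumes "fbm M H B" "t \<ge> 0"
  shows "sq_integrable M (B t)"
proof -
  have "B t \<in> borel_measurable M" "integrable M (\<lambda>w. B t w * B t w)"
    using assms unfolding fbm_def by auto
  then show ?thesis unfolding sq_integrable_def by (simp add: power2_eq_square)
qed

lemma fbm_integral_eq_0:
  assumes B: "fbm M H B" and "t \<ge> 0"
  shows "(\<integral>w. B t w \<partial>M) = 0"
proof -
  interpret prob_space M using fbm_prob_space[OF B] .
  have "\<forall>S c. finite S \<longrightarrow> S \<subseteq> {0..} \<longrightarrow> centered_gaussian M (\<lambda>w. \<Sum>t\<in>S. c t * B t w)"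
    using B unfolding fbm_def by (elim conjE)
  from this[rule_format, of "{t}" "\<lambda>_. 1"] have "centered_gaussian M (B t)"
    using \<open>t \<ge> 0\<close> by simp
  show ?thesis
  proof (cases "\<exists>\<sigma>>0. distributed M lborel (B t) (normal_density 0 \<sigma>)")
    case True
    then obtain \<sigma> where "\<sigma> > 0" "distributed M lborel (B t) (normal_density 0 \<sigma>)" by blast
    from normal_distributed_expectation[OF this] show ?thesis .
  next
    case False
    then have "AE w in M. B t w = 0"
      using \<open>centered_gaussian M (B t)\<close> unfolding centered_gaussian_def by blast
    then show ?thesis by (rule integral_eq_zero_AE)
  qed
qed

lemma fbm_integral_increments_mult:
  assumes B: "fbm M H B" and "a \<ge> 0" "b \<ge> 0" "c \<ge> 0" "d \<ge> 0"
  shows "(\<integral>w. (B a w - B b w) * (B c w - B d w) \<partial>M) =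
    fbm_cov H a c - fbm_cov H a d - fbm_cov H b c + fbm_cov H b d"
proof -
  have sq: "sq_integrable M (B a)" "sq_integrable M (B b)" "sq_integrable M (B c)" "sq_integrable M (B d)"
    using assms by (simp_all add: fbm_sq_integrable)
  note int = sq_integrable_imp_integrable_mult[OF sq(1) sq(3)] sq_integrable_imp_integrable_mult[OF sq(1) sq(4)]
    sq_integrable_imp_integrable_mult[OF sq(2) sq(3)] sq_integrable_imp_integrable_mult[OF sq(2) sq(4)]
  have "(\<lambda>w. (B a w - B b w) * (B c w - B d w)) =
        (\<lambda>w. B a w * B c w - B a w * B d w - B b w * B c w + B b w * B d w)"
    by (simp add: fun_eq_iff algebra_simps)
  then have "(\<integral>w. (B a w - B b w) * (B c w - B d w) \<partial>M) = (\<integral>w. B a w * B c w \<partial>M)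
      - (\<integral>w. B a w * B d w \<partial>M) - (\<integral>w. B b w * B c w \<partial>M) + (\<integral>w. B b w * B d w \<partial>M)"
    using int by (simp only: Bochner_Integration.integral_add Bochner_Integration.integral_diff
        Bochner_Integration.integrable_diff)
  then show ?thesis using assms by (simp add: fbm_integral_mult[OF B])
qed

lemma fbm_L2_norm_increment:
  assumes B: "fbm M H B" and "a \<ge> 0" "b \<ge> 0"
  shows "L2_norm M (\<lambda>w. B a w - B b w) = \<bar>a - b\<bar> powr H"
proof -
  have "(\<integral>w. (B a w - B b w)^2 \<partial>M) = \<bar>a - b\<bar> powr (2*H)"
    using fbm_integral_increments_mult[OF B assms(2,3,2,3)]
    by (simp add: power2_eq_square fbm_cov_def abs_minus_commute field_simps)
  also have "\<dots> = (\<bar>a - b\<bar> powr H)^2"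
    by (simp add: power2_eq_square powr_add[symmetric])
  finally show ?thesis unfolding L2_norm_def by simp
qed

text \<open>Nonnegative because \<open>\<bar>u - v\<bar> \<le> max (T - u) (T - v)\<close>.\<close>
lemma fbm_integral_increments_to_end_nonneg:
  assumes B: "fbm M H B" and u: "0 \<le> u" "u \<le> T" and v: "0 \<le> v" "v \<le> T"
  shows "0 \<le> (\<integral>w. (B T w - B u w) * (B T w - B v w) \<partial>M)"
proof -
  have H: "H > 0" using fbm_Hurst_pos[OF B] .
  have "(\<integral>w. (B T w - B u w) * (B T w - B v w) \<partial>M) =
      fbm_cov H T T - fbm_cov H T v - fbm_cov H u T + fbm_cov H u v"
    using u v by (intro fbm_integral_increments_mult[OF B]) auto
  also have "\<dots> = ((T - u) powr (2*H) + (T - v) powr (2*H) - \<bar>u - v\<bar> powr (2*H)) / 2"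
    using u v by (simp add: fbm_cov_def abs_minus_commute[of u T] field_simps)
  finally have eq: "(\<integral>w. (B T w - B u w) * (B T w - B v w) \<partial>M) =
      ((T - u) powr (2*H) + (T - v) powr (2*H) - \<bar>u - v\<bar> powr (2*H)) / 2" .
  have "\<bar>u - v\<bar> powr (2*H) \<le> max (T - u) (T - v) powr (2*H)"
    using u v H by (intro powr_mono2) auto
  also have "\<dots> \<le> (T - u) powr (2*H) + (T - v) powr (2*H)"
    by (simp add: max_def)
  finally show ?thesis unfolding eq by simp
qed

section \<open>Riemann sums and the Wiener integral\<close>

lemma sum_backward_diff:
  fixes c :: "nat \<Rightarrow> 'a::ab_group_add"
  shows "(\<Sum>j<Suc m. c j - (if j = 0 then 0 else c (j - 1))) = c m"
  by (induction m) simp_all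

lemma sum_Abel:
  fixes c b :: "nat \<Rightarrow> 'a::comm_ring"
  shows "(\<Sum>j<m. c j * (b (Suc j) - b j)) =
    (\<Sum>j<m. (c j - (if j = 0 then 0 else c (j - 1))) * (b m - b j))"
proof (induction m)
  case (Suc m)
  define d where "d j = c j - (if j = 0 then 0 else c (j - 1))" for j
  have "(\<Sum>j<Suc m. d j * (b (Suc m) - b j)) =
      (\<Sum>j<Suc m. d j * (b m - b j) + d j * (b (Suc m) - b m))"
    by (intro sum.cong) (simp_all add: algebra_simps)
  also have "\<dots> = (\<Sum>j<Suc m. d j * (b m - b j)) + c m * (b (Suc m) - b m)"
    by (simp only: sum.distrib sum_distrib_right[symmetric] d_def sum_backward_diff)
  also have "(\<Sum>j<Suc m. d j * (b m - b j)) = (\<Sum>j<m. c j * (b (Suc j) - b j))"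
    using Suc.IH by (simp add: d_def)
  finally show ?case by (simp add: d_def)
qed simp

lemma sum_backward_diff_le:
  fixes c :: "nat \<Rightarrow> real"
  assumes "0 \<le> c 0" and "\<And>j. j < m \<Longrightarrow> c j \<le> c (Suc j)"
  shows "(\<Sum>j<m. c j - (if j = 0 then 0 else c (j - 1))) \<le> c m"
proof -
  have "0 \<le> c m - (if m = 0 then 0 else c (m - 1))"
    using assms by (cases m) auto
  then show ?thesis using sum_backward_diff[of c m] by simp
qed

text \<open>By Abel summation the sum becomes \<open>\<Sum> (c j - c (j - 1)) (b m - b j)\<close>, whose
  coefficients are nonnegative and add up to at most \<open>c m\<close>.\<close>
lemma L2_norm_Abel_sum_le:
  fixes c :: "nat \<Rightarrow> real"
  assumes sq: "\<And>j. j \<le> m \<Longrightarrow> sq_integrable M (b j)"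
    and c: "0 \<le> c 0" "\<And>j. j < m \<Longrightarrow> c j \<le> c (Suc j)"
    and \<delta>: "\<And>j. j < m \<Longrightarrow> L2_norm M (\<lambda>w. b m w - b j w) \<le> \<delta>" "0 \<le> \<delta>"
  shows "L2_norm M (\<lambda>w. \<Sum>j<m. c j * (b (Suc j) w - b j w)) \<le> c m * \<delta>"
proof -
  define d where "d j = c j - (if j = 0 then 0 else c (j - 1))" for j
  have d_nonneg: "0 \<le> d j" if "j < m" for j
    using that c by (cases j) (auto simp: d_def)
  have "(\<Sum>j<m. c j * (b (Suc j) w - b j w)) = (\<Sum>j<m. d j * (b m w - b j w))" for w
    using sum_Abel[of c "\<lambda>j. b j w" m] by (simp add: d_def)
  then have "L2_norm M (\<lambda>w. \<Sum>j<m. c j * (b (Suc j) w - b j w)) =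
      L2_norm M (\<lambda>w. \<Sum>j<m. d j * (b m w - b j w))"
    by simp
  also have "\<dots> \<le> (\<Sum>j<m. L2_norm M (\<lambda>w. d j * (b m w - b j w)))"
    using sq by (intro L2_norm_sum_le sq_integrable_cmult sq_integrable_diff) auto
  also have "\<dots> \<le> (\<Sum>j<m. d j * \<delta>)"
    using d_nonneg \<delta>(1) by (intro sum_mono) (simp add: L2_norm_cmult mult_left_mono)
  also have "\<dots> \<le> c m * \<delta>"
    unfolding sum_distrib_right[symmetric] d_def
    using sum_backward_diff_le[OF c] \<delta>(2) by (rule mult_right_mono)
  finally show ?thesis .
qed

definition grid :: "real \<Rightarrow> nat \<Rightarrow> nat \<Rightarrow> real" where
  "grid T k i = T * real i / real (Suc k)"

lemma riemann_sum_grid: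
  "riemann_sum B T \<phi> k w = (\<Sum>i<Suc k. \<phi> (grid T k i) * (B (grid T k (Suc i)) w - B (grid T k i) w))"
  unfolding riemann_sum_def grid_def ..

lemma grid_0 [simp]: "grid T k 0 = 0" and grid_end [simp]: "grid T k (Suc k) = T"
  unfolding grid_def by simp_all

lemma grid_nonneg: "T \<ge> 0 \<Longrightarrow> grid T k i \<ge> 0"
  unfolding grid_def by simp

lemma grid_mono: "T \<ge> 0 \<Longrightarrow> i \<le> j \<Longrightarrow> grid T k i \<le> grid T k j"
  unfolding grid_def by (intro divide_right_mono mult_left_mono) auto

lemma grid_le_end: "T \<ge> 0 \<Longrightarrow> i \<le> Suc k \<Longrightarrow> grid T k i \<le> T"
  using grid_mono[of T i "Suc k" k] by simp

lemma grid_in_interval: "T \<ge> 0 \<Longrightarrow> i \<le> Suc k \<Longrightarrow> grid T k i \<in> {0..T}"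
  using grid_nonneg grid_le_end by auto

lemma grid_refine:
  assumes "Suc N = Suc k * m"
  shows "grid T k i = grid T N (i * m)"
proof -
  have "real (Suc N) = real (Suc k) * real m" "real m \<noteq> 0"
    using assms by (metis of_nat_mult, metis mult_0_right of_nat_eq_0_iff nat.distinct(1))
  then show ?thesis unfolding grid_def by (simp only:) (simp add: field_simps)
qed

lemma grid_refine_diff_le:
  assumes N: "Suc N = Suc k * m" and "j \<le> m" "T \<ge> 0"
  shows "\<bar>grid T N (i*m + m) - grid T N (i*m + j)\<bar> \<le> T / real (Suc k)"
proof -
  have R: "real (Suc N) = real (Suc k) * real m" and m: "real m > 0"
    using N by (metis of_nat_mult, metis Zero_not_Suc mult_0_right of_nat_0_less_iff neq0_conv)
  have "grid T N (i*m + m) - grid T N (i*m + j) = T * (real m - real j) / real (Suc N)"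
    unfolding grid_def by (simp add: diff_divide_distrib[symmetric] algebra_simps)
  moreover have "0 \<le> T * (real m - real j) / real (Suc N)"
    using assms by simp
  moreover have "T * (real m - real j) / real (Suc N) \<le> T * real m / real (Suc N)"
    using assms by (intro divide_right_mono mult_left_mono) auto
  moreover have "T * real m / real (Suc N) = T / real (Suc k)"
    unfolding R using m by simp
  ultimately show ?thesis by simp
qed

lemma grid_refine_in_interval:
  assumes "Suc N = Suc k * m" "T \<ge> 0" "i < Suc k" "j \<le> m"
  shows "grid T N (i*m + j) \<in> {0..T}"
proof -
  have "i*m \<le> k*m" using assms(3) by (simp add: less_Suc_eq_le)
  then have "i*m + j \<le> Suc k * m" using assms(4) by (simp add: add.commute add_mono)
  then show ?thesis using assms(1,2) by (intro grid_in_interval) simp_all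
qed

lemma sum_cells_telescope:
  fixes \<phi> :: "real \<Rightarrow> 'a::ab_group_add"
  assumes "Suc N = Suc k * m"
  shows "(\<Sum>i<Suc k. \<phi> (grid T N (i*m + m)) - \<phi> (grid T N (i*m))) = \<phi> T - \<phi> 0"
proof -
  have "(\<Sum>i<Suc k. \<phi> (grid T N (i*m + m)) - \<phi> (grid T N (i*m))) =
      (\<Sum>i<Suc k. \<phi> (grid T N (Suc i * m)) - \<phi> (grid T N (i * m)))"
    by (simp add: add.commute)
  also have "\<dots> = \<phi> (grid T N (Suc k * m)) - \<phi> (grid T N (0 * m))"
    by (rule sum_lessThan_telescope[of "\<lambda>i. \<phi> (grid T N (i * m))"])
  also have "\<dots> = \<phi> T - \<phi> 0"
    using assms by (metis grid_0 grid_end mult_0)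
  finally show ?thesis .
qed

lemma sq_integrable_riemann_sum:
  assumes B: "fbm M H B" and T: "T \<ge> 0"
  shows "sq_integrable M (riemann_sum B T \<phi> k)"
  unfolding riemann_sum_grid[abs_def]
  using T by (intro sq_integrable_sum sq_integrable_cmult sq_integrable_diff fbm_sq_integrable[OF B]
      grid_nonneg) simp_all

lemma integral_riemann_sum:
  assumes B: "fbm M H B" and T: "T \<ge> 0"
  shows "(\<integral>w. riemann_sum B T \<phi> k w \<partial>M) = 0"
proof -
  have int_B: "integrable M (B (grid T k i))" for i
    using B T by (intro prob_space.sq_integrable_imp_integrable fbm_prob_space fbm_sq_integrable grid_nonneg)
  have int: "integrable M (\<lambda>w. \<phi> (grid T k i) * (B (grid T k (Suc i)) w - B (grid T k i) w))" for i
    by (intro integrable_mult_right Bochner_Integration.integrable_diff int_B)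
  have zero: "(\<integral>w. \<phi> (grid T k i) * (B (grid T k (Suc i)) w - B (grid T k i) w) \<partial>M) = 0" for i
    using Bochner_Integration.integral_diff[OF int_B[of "Suc i"] int_B[of i]]
    by (simp add: fbm_integral_eq_0[OF B] grid_nonneg[OF T])
  have "(\<integral>w. (\<Sum>i<Suc k. \<phi> (grid T k i) * (B (grid T k (Suc i)) w - B (grid T k i) w)) \<partial>M) =
      (\<Sum>i<Suc k. \<integral>w. \<phi> (grid T k i) * (B (grid T k (Suc i)) w - B (grid T k i) w) \<partial>M)"
    by (rule Bochner_Integration.integral_sum) (rule int)
  then show ?thesis unfolding riemann_sum_grid zero by simp
qed

lemma riemann_sum_refine_diff:
  assumes N: "Suc N = Suc k * m"
  shows "riemann_sum B T \<phi> N w - riemann_sum B T \<phi> k w =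
    (\<Sum>i<Suc k. \<Sum>j<m. (\<phi> (grid T N (i*m + j)) - \<phi> (grid T N (i*m))) *
        (B (grid T N (Suc (i*m + j))) w - B (grid T N (i*m + j)) w))"
proof -
  let ?dB = "\<lambda>j. B (grid T N (Suc j)) w - B (grid T N j) w"
  have "riemann_sum B T \<phi> N w = (\<Sum>i<Suc k. \<Sum>j<m. \<phi> (grid T N (i*m + j)) * ?dB (i*m + j))"
  proof -
    have "(\<Sum>j\<in>{a..<a + n}. f j) = (\<Sum>j<n. f (a + j))" for a n and f :: "nat \<Rightarrow> real"
      by (induction n) simp_all
    then show ?thesis unfolding riemann_sum_grid N sum.nat_group[symmetric] by simp
  qed
  moreover have "riemann_sum B T \<phi> k w = (\<Sum>i<Suc k. \<Sum>j<m. \<phi> (grid T N (i*m)) * ?dB (i*m + j))"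
  proof -
    have "B (grid T N (i*m + m)) w - B (grid T N (i*m)) w = (\<Sum>j<m. ?dB (i*m + j))" for i
      using sum_lessThan_telescope[of "\<lambda>j. B (grid T N (i*m + j)) w" m] by simp
    then show ?thesis
      unfolding riemann_sum_grid grid_refine[OF N] by (simp add: sum_distrib_left add.commute)
  qed
  ultimately show ?thesis by (simp add: sum_subtractf left_diff_distrib)
qed

lemma L2_norm_riemann_sum_refine_le:
  assumes B: "fbm M H B" and T: "T > 0" and \<phi>: "mono_on {0..T} \<phi>"
    and N: "Suc N = Suc k * m"
  shows "L2_norm M (\<lambda>w. riemann_sum B T \<phi> N w - riemann_sum B T \<phi> k w)
    \<le> (\<phi> T - \<phi> 0) * (T / real (Suc k)) powr H"
proof -
  have T0: "T \<ge> 0" using T by simp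
  define \<delta> where "\<delta> = (T / real (Suc k)) powr H"
  define c where "c i j = \<phi> (grid T N (i*m + j)) - \<phi> (grid T N (i*m))" for i j
  define b where "b i j = B (grid T N (i*m + j))" for i j
  have b: "sq_integrable M (b i j)" for i j
    unfolding b_def using B T0 by (intro fbm_sq_integrable grid_nonneg)
  have block: "L2_norm M (\<lambda>w. \<Sum>j<m. c i j * (b i (Suc j) w - b i j w)) \<le> c i m * \<delta>"
    if i: "i < Suc k" for i
  proof (rule L2_norm_Abel_sum_le[OF b])
    show "c i j \<le> c i (Suc j)" if "j < m" for j
      using grid_refine_in_interval[OF N T0 i, of j] grid_refine_in_interval[OF N T0 i, of "Suc j"] that
      by (simp add: c_def mono_onD[OF \<phi>] grid_mono[OF T0])
    show "L2_norm M (\<lambda>w. b i m w - b i j w) \<le> \<delta>" if "j < m" for j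
      unfolding b_def \<delta>_def fbm_L2_norm_increment[OF B grid_nonneg[OF T0] grid_nonneg[OF T0]]
      using grid_refine_diff_le[OF N, of j T i] that T fbm_Hurst_pos[OF B]
      by (intro powr_mono2) auto
  qed (simp_all add: c_def \<delta>_def)
  have "L2_norm M (\<lambda>w. riemann_sum B T \<phi> N w - riemann_sum B T \<phi> k w) =
      L2_norm M (\<lambda>w. \<Sum>i<Suc k. \<Sum>j<m. c i j * (b i (Suc j) w - b i j w))"
    unfolding riemann_sum_refine_diff[OF N] by (simp add: c_def b_def)
  also have "\<dots> \<le> (\<Sum>i<Suc k. L2_norm M (\<lambda>w. \<Sum>j<m. c i j * (b i (Suc j) w - b i j w)))"
    by (intro L2_norm_sum_le sq_integrable_sum sq_integrable_cmult sq_integrable_diff b) simp_all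
  also have "\<dots> \<le> (\<Sum>i<Suc k. c i m * \<delta>)"
    using block by (intro sum_mono) simp
  also have "\<dots> = (\<phi> T - \<phi> 0) * \<delta>"
    using sum_cells_telescope[OF N, of \<phi> T] by (simp add: c_def sum_distrib_right[symmetric])
  finally show ?thesis unfolding \<delta>_def .
qed

lemma L2_norm_riemann_sum_diff_le:
  assumes B: "fbm M H B" and T: "T > 0" and \<phi>: "mono_on {0..T} \<phi>"
  shows "L2_norm M (\<lambda>w. riemann_sum B T \<phi> i w - riemann_sum B T \<phi> j w)
    \<le> (\<phi> T - \<phi> 0) * ((T / real (Suc i)) powr H + (T / real (Suc j)) powr H)"
proof -
  define N where "N = Suc i * Suc j - 1"
  have N: "Suc N = Suc i * Suc j" "Suc N = Suc j * Suc i" unfolding N_def by simp_all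
  have sq: "sq_integrable M (riemann_sum B T \<phi> k)" for k
    using B T by (intro sq_integrable_riemann_sum) simp_all
  have "L2_norm M (\<lambda>w. riemann_sum B T \<phi> i w - riemann_sum B T \<phi> j w) =
      L2_norm M (\<lambda>w. (riemann_sum B T \<phi> N w - riemann_sum B T \<phi> j w) -
        (riemann_sum B T \<phi> N w - riemann_sum B T \<phi> i w))"
    by simp
  also have "\<dots> \<le> L2_norm M (\<lambda>w. riemann_sum B T \<phi> N w - riemann_sum B T \<phi> j w) +
      L2_norm M (\<lambda>w. riemann_sum B T \<phi> N w - riemann_sum B T \<phi> i w)"
    by (intro L2_norm_diff_le sq_integrable_diff sq)
  also have "\<dots> \<le> (\<phi> T - \<phi> 0) * (T / real (Suc j)) powr H + (\<phi> T - \<phi> 0) * (T / real (Suc i)) powr H"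
    by (intro add_mono L2_norm_riemann_sum_refine_le[OF B T \<phi> N(2)] L2_norm_riemann_sum_refine_le[OF B T \<phi> N(1)])
  finally show ?thesis by (simp add: algebra_simps)
qed

lemma riemann_sum_Cauchy:
  assumes B: "fbm M H B" and T: "T > 0" and \<phi>: "mono_on {0..T} \<phi>" and e: "e > 0"
  shows "\<exists>N. \<forall>i\<ge>N. \<forall>j\<ge>N. L2_norm M (\<lambda>w. riemann_sum B T \<phi> i w - riemann_sum B T \<phi> j w) < e"
proof -
  define a where "a k = (T / real (Suc k)) powr H" for k
  define V where "V = \<phi> T - \<phi> 0 + 1"
  have V: "V > 0" "\<phi> T - \<phi> 0 \<le> V" using mono_onD[OF \<phi>, of 0 T] T by (auto simp: V_def)
  have "(\<lambda>k. T / real (Suc k)) \<longlonglongrightarrow> 0"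
    using tendsto_mult[OF tendsto_const[of T] LIMSEQ_inverse_real_of_nat] by (simp add: divide_inverse)
  then have "a \<longlonglongrightarrow> 0"
    unfolding a_def using T fbm_Hurst_pos[OF B] by (intro tendsto_zero_powrI[OF _ tendsto_const]) auto
  then have "eventually (\<lambda>k. a k < e / (2 * V)) sequentially"
    using e V by (intro order_tendstoD(2)) auto
  then obtain N where N: "\<And>k. k \<ge> N \<Longrightarrow> a k < e / (2 * V)"
    by (auto simp: eventually_sequentially)
  have "L2_norm M (\<lambda>w. riemann_sum B T \<phi> i w - riemann_sum B T \<phi> j w) < e" if "i \<ge> N" "j \<ge> N" for i j
  proof -
    have "L2_norm M (\<lambda>w. riemann_sum B T \<phi> i w - riemann_sum B T \<phi> j w) \<le> V * (a i + a j)"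
      using L2_norm_riemann_sum_diff_le[OF B T \<phi>, of i j] V(2)
      by (simp add: a_def) (meson add_nonneg_nonneg mult_right_mono order_trans powr_ge_zero)
    also have "\<dots> < V * (e / (2 * V) + e / (2 * V))"
      using N[OF \<open>i \<ge> N\<close>] N[OF \<open>j \<ge> N\<close>] V(1) by (intro mult_strict_left_mono add_strict_mono)
    also have "\<dots> = e" using V(1) by (simp add: field_simps)
    finally show ?thesis .
  qed
  then show ?thesis by blast
qed

text \<open>The Riemann sums are Cauchy in \<open>L\<^sup>2\<close>, so the choice in the definition of the Wiener
  integral is not vacuous.\<close>
lemma wiener_integral_L2_limit:
  assumes B: "fbm M H B" and T: "T > 0" and \<phi>: "mono_on {0..T} \<phi>"
  shows "sq_integrable M (wiener_integral M B T \<phi>)"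
    and "(\<lambda>k. L2_norm M (\<lambda>w. riemann_sum B T \<phi> k w - wiener_integral M B T \<phi> w)) \<longlonglongrightarrow> 0"
proof -
  interpret prob_space M using fbm_prob_space[OF B] .
  define X where "X = wiener_integral M B T \<phi>"
  define S where "S k = riemann_sum B T \<phi> k" for k
  have S: "sq_integrable M (S k)" for k
    unfolding S_def using B T by (intro sq_integrable_riemann_sum) simp_all
  have "\<exists>X. X \<in> borel_measurable M \<and>
      (\<lambda>k. \<integral>\<^sup>+w. ennreal ((riemann_sum B T \<phi> k w - X w)^2) \<partial>M) \<longlonglongrightarrow> 0"
    using S riemann_sum_Cauchy[OF B T \<phi>] unfolding S_def by (rule sq_integrable_Cauchy_converges)
  then have "X \<in> borel_measurable M \<and>
      (\<lambda>k. \<integral>\<^sup>+w. ennreal ((riemann_sum B T \<phi> k w - X w)^2) \<partial>M) \<longlonglongrightarrow> 0"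
    unfolding X_def wiener_integral_def by (rule someI_ex)
  then have X_meas: "X \<in> borel_measurable M"
    and lim: "(\<lambda>k. \<integral>\<^sup>+ w. ennreal ((S k w - X w)^2) \<partial>M) \<longlonglongrightarrow> 0"
    unfolding S_def by auto
  obtain k0 where "(\<integral>\<^sup>+ w. ennreal ((S k0 w - X w)^2) \<partial>M) < 1"
    using order_tendstoD(2)[OF lim, of 1] by (auto simp: eventually_sequentially)
  moreover have "S k0 \<in> borel_measurable M" using S[of k0] unfolding sq_integrable_def by blast
  ultimately have "integrable M (\<lambda>w. (S k0 w - X w)^2)"
    using X_meas by (auto simp: integrable_iff_bounded less_top[symmetric] elim: order.strict_trans)
  then have "sq_integrable M (\<lambda>w. S k0 w - X w)"
    using S[of k0] X_meas by (auto simp: sq_integrable_def)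
  then have "sq_integrable M (\<lambda>w. S k0 w - (S k0 w - X w))"
    by (rule sq_integrable_diff[OF S])
  then show X: "sq_integrable M (wiener_integral M B T \<phi>)" unfolding X_def[symmetric] by simp
  have "(\<lambda>k. ennreal ((L2_norm M (\<lambda>w. S k w - X w))^2)) \<longlonglongrightarrow> 0"
    using lim S X unfolding X_def[symmetric]
    by (simp add: nn_integral_square_eq_L2_norm sq_integrable_diff)
  then have "(\<lambda>k. (L2_norm M (\<lambda>w. S k w - X w))^2) \<longlonglongrightarrow> 0"
    by (simp add: ennreal_tendsto_0_iff)
  then have "(\<lambda>k. sqrt ((L2_norm M (\<lambda>w. S k w - X w))^2)) \<longlonglongrightarrow> sqrt 0"
    by (rule tendsto_real_sqrt)
  then show "(\<lambda>k. L2_norm M (\<lambda>w. riemann_sum B T \<phi> k w - wiener_integral M B T \<phi> w)) \<longlonglongrightarrow> 0"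
    unfolding S_def X_def by (simp add: L2_norm_nonneg)
qed

lemma tendsto_integral_riemann_sum_mult:
  assumes B: "fbm M H B" and T: "T > 0" and \<phi>: "mono_on {0..T} \<phi>" and \<psi>: "mono_on {0..T} \<psi>"
  shows "(\<lambda>k. \<integral>w. riemann_sum B T \<phi> k w * riemann_sum B T \<psi> k w \<partial>M)
    \<longlonglongrightarrow> (\<integral>w. wiener_integral M B T \<phi> w * wiener_integral M B T \<psi> w \<partial>M)"
  using B T by (intro tendsto_integral_mult_L2 sq_integrable_riemann_sum wiener_integral_L2_limit \<phi> \<psi>) auto

lemma integral_wiener_integral:
  assumes B: "fbm M H B" and T: "T > 0" and \<phi>: "mono_on {0..T} \<phi>"
  shows "(\<integral>w. wiener_integral M B T \<phi> w \<partial>M) = 0"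
proof -
  interpret prob_space M using fbm_prob_space[OF B] .
  have "(\<lambda>k. \<integral>w. riemann_sum B T \<phi> k w * 1 \<partial>M) \<longlonglongrightarrow> (\<integral>w. wiener_integral M B T \<phi> w * 1 \<partial>M)"
    using B T by (intro tendsto_integral_mult_L2 sq_integrable_riemann_sum wiener_integral_L2_limit \<phi>)
      (auto simp: L2_norm_def)
  then show ?thesis using integral_riemann_sum[OF B] T by (simp add: LIMSEQ_const_iff)
qed

lemma riemann_sum_eq_sum_increments_to_end:
  "riemann_sum B T \<phi> k w = (\<Sum>j<Suc k.
    (\<phi> (grid T k j) - (if j = 0 then 0 else \<phi> (grid T k (j - 1)))) * (B T w - B (grid T k j) w))"
  using sum_Abel[of "\<lambda>j. \<phi> (grid T k j)" "\<lambda>j. B (grid T k j) w" "Suc k"]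
  by (simp only: riemann_sum_grid grid_end)

text \<open>Written as \<open>\<Sum> q\<^sub>j (B T - B t\<^sub>j)\<close> with \<open>q\<^sub>j \<ge> 0\<close>, the Riemann sums of nondecreasing
  nonnegative integrands have nonnegatively correlated terms; the term \<open>j = 0\<close> alone gives the bound.\<close>
lemma integral_riemann_sum_mult_ge:
  assumes B: "fbm M H B" and T: "T > 0" and \<phi>: "mono_on {0..T} \<phi>" and \<psi>: "mono_on {0..T} \<psi>"
    and nonneg: "\<phi> 0 \<ge> 0" "\<psi> 0 \<ge> 0"
  shows "\<phi> 0 * \<psi> 0 * T powr (2*H) \<le> (\<integral>w. riemann_sum B T \<phi> k w * riemann_sum B T \<psi> k w \<partial>M)"
proof -
  have T0: "T \<ge> 0" using T by simp
  define q where "q f j = f (grid T k j) - (if j = 0 then 0 else f (grid T k (j - 1)))"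
    for f :: "real \<Rightarrow> real" and j
  define Y where "Y j w = B T w - B (grid T k j) w" for j w
  have q_nonneg: "q \<phi> j \<ge> 0" "q \<psi> j \<ge> 0" if "j < Suc k" for j
    using that nonneg grid_in_interval[OF T0, of "j - 1" k] grid_in_interval[OF T0, of j k]
    by (auto simp: q_def grid_mono[OF T0] intro!: mono_onD[OF \<phi>] mono_onD[OF \<psi>])
  have EY: "(\<integral>w. Y i w * Y j w \<partial>M) \<ge> 0" if "i < Suc k" "j < Suc k" for i j
    unfolding Y_def using that grid_in_interval[OF T0]
    by (intro fbm_integral_increments_to_end_nonneg[OF B]) auto
  have EY0: "(\<integral>w. Y 0 w * Y 0 w \<partial>M) = T powr (2*H)"
    using T0 by (simp add: Y_def fbm_integral_increments_mult[OF B] fbm_cov_def)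
  have "\<phi> 0 * \<psi> 0 * T powr (2*H) = q \<phi> 0 * q \<psi> 0 * (\<integral>w. Y 0 w * Y 0 w \<partial>M)"
    by (simp add: EY0 q_def)
  also have "\<dots> \<le> (\<Sum>j<Suc k. q \<phi> 0 * q \<psi> j * (\<integral>w. Y 0 w * Y j w \<partial>M))"
    using q_nonneg EY by (intro member_le_sum mult_nonneg_nonneg) auto
  also have "\<dots> \<le> (\<Sum>i<Suc k. \<Sum>j<Suc k. q \<phi> i * q \<psi> j * (\<integral>w. Y i w * Y j w \<partial>M))"
    using q_nonneg EY by (intro member_le_sum sum_nonneg mult_nonneg_nonneg) auto
  also have "\<dots> = (\<integral>w. riemann_sum B T \<phi> k w * riemann_sum B T \<psi> k w \<partial>M)"
    unfolding riemann_sum_eq_sum_increments_to_end q_def[symmetric] Y_def[symmetric]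
    using T0 by (intro integral_sum_mult_sum[symmetric])
      (simp_all add: Y_def[abs_def] sq_integrable_diff fbm_sq_integrable[OF B] grid_nonneg)
  finally show ?thesis .
qed

lemma wiener_integral_mult_ge:
  assumes B: "fbm M H B" and T: "T > 0" and \<phi>: "mono_on {0..T} \<phi>" and \<psi>: "mono_on {0..T} \<psi>"
    and nonneg: "\<phi> 0 \<ge> 0" "\<psi> 0 \<ge> 0"
  shows "\<phi> 0 * \<psi> 0 * T powr (2*H) \<le> (\<integral>w. wiener_integral M B T \<phi> w * wiener_integral M B T \<psi> w \<partial>M)"
  using tendsto_integral_riemann_sum_mult[OF B T \<phi> \<psi>]
  by (rule LIMSEQ_le_const) (use integral_riemann_sum_mult_ge[OF assms] in auto)

corollary wiener_integral_mult_pos: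
  assumes B: "fbm M H B" and T: "T > 0" and \<phi>: "mono_on {0..T} \<phi>" and \<psi>: "mono_on {0..T} \<psi>"
    and pos: "\<phi> 0 > 0" "\<psi> 0 > 0"
  shows "0 < (\<integral>w. wiener_integral M B T \<phi> w * wiener_integral M B T \<psi> w \<partial>M)"
proof -
  have "0 < \<phi> 0 * \<psi> 0 * T powr (2*H)" using pos T by simp
  also have "\<dots> \<le> (\<integral>w. wiener_integral M B T \<phi> w * wiener_integral M B T \<psi> w \<partial>M)"
    using pos by (intro wiener_integral_mult_ge[OF B T \<phi> \<psi>]) simp_all
  finally show ?thesis .
qed

lemma set_borel_measurable_Icc_if_Ioo:
  fixes h :: "real \<Rightarrow> real"
  assumes "set_borel_measurable lborel {a<..<b} h" "a < b"
  shows "set_borel_measurable lborel {a..b} h"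
proof -
  have "(\<lambda>x. indicator {a<..<b} x * h x) \<in> borel_measurable lborel"
    using assms(1) unfolding set_borel_measurable_def by simp
  then have "(\<lambda>x. indicator {a<..<b} x * h x + indicator {a} x * h a + indicator {b} x * h b)
      \<in> borel_measurable lborel"
    by measurable
  moreover have "(\<lambda>x. indicator {a..b} x * h x) =
      (\<lambda>x. indicator {a<..<b} x * h x + indicator {a} x * h a + indicator {b} x * h b)"
    using assms(2) by (auto simp: fun_eq_iff indicator_def)
  ultimately show ?thesis unfolding set_borel_measurable_def by simp
qed

lemma set_borel_measurable_mono_on:
  fixes f :: "real \<Rightarrow> real"
  assumes "mono_on {a..b} f"
  shows "set_borel_measurable lborel {a..b} f"
  unfolding set_borel_measurable_def
  using borel_measurable_mono_on_fnc[OF assms]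
  by (subst borel_measurable_restrict_space_iff[symmetric]) auto

lemma set_integrable_bounded:
  fixes f :: "real \<Rightarrow> real"
  assumes "set_borel_measurable lborel {a..b} f" and "AE x in lborel. x \<in> {a..b} \<longrightarrow> \<bar>f x\<bar> \<le> K"
  shows "set_integrable lborel {a..b} f"
  using assms by (intro set_integrable_bound[OF borel_integrable_atLeastAtMost'[OF continuous_on_const[where c=K]]])
    (auto elim!: eventually_mono)

lemma set_integral_tail_antimono:
  fixes a :: "real \<Rightarrow> real"
  assumes a: "set_integrable lborel {0..T} a" "\<And>t. t \<in> {0..T} \<Longrightarrow> 0 \<le> a t"
    and xy: "0 \<le> x" "x \<le> y"
  shows "(LINT s:{y..T}|lborel. a s) \<le> (LINT s:{x..T}|lborel. a s)"
proof -
  have "(LINT s:{y..T}|lborel. a s) = (LINT s:{x..T}|lborel. indicator {y..T} s * a s)"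
    unfolding set_lebesgue_integral_def
    by (intro Bochner_Integration.integral_cong) (use xy in \<open>auto simp: indicator_def\<close>)
  also have "\<dots> \<le> (LINT s:{x..T}|lborel. a s)"
  proof (rule set_integral_mono)
    show "set_integrable lborel {x..T} a" by (rule set_integrable_subset[OF a(1)]) (use xy in auto)
    have "set_integrable lborel {y..T} a" by (rule set_integrable_subset[OF a(1)]) (use xy in auto)
    then show "set_integrable lborel {x..T} (\<lambda>s. indicator {y..T} s * a s)"
      unfolding set_integrable_def
      by (rule Bochner_Integration.integrable_cong[THEN iffD1, rotated 2])
         (use xy in \<open>auto simp: indicator_def\<close>)
  qed (use a(2) xy in \<open>auto simp: indicator_def\<close>)
  finally show ?thesis .
qed

lemma AE_Icc_if_AE_Ioo:
  fixes a b :: real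
  assumes "AE t in lborel. t \<in> {a<..<b} \<longrightarrow> P t"
  shows "AE t in lborel. t \<in> {a..b} \<longrightarrow> P t"
  using assms AE_lborel_singleton[of a] AE_lborel_singleton[of b] by eventually_elim auto

lemma set_integrable_mult_mono_on:
  fixes h \<psi> :: "real \<Rightarrow> real"
  assumes "a < b" and h_meas: "set_borel_measurable lborel {a<..<b} h"
    and h_bdd: "AE t in lborel. t \<in> {a<..<b} \<longrightarrow> \<bar>h t\<bar> \<le> K" and \<psi>: "mono_on {a..b} \<psi>"
  shows "set_integrable lborel {a..b} (\<lambda>\<tau>. h \<tau> * \<psi> \<tau>)"
proof (rule set_integrable_bounded[where K="\<bar>K\<bar> * max \<bar>\<psi> a\<bar> \<bar>\<psi> b\<bar>"])
  show "set_borel_measurable lborel {a..b} (\<lambda>\<tau>. h \<tau> * \<psi> \<tau>)"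
    using set_borel_measurable_Icc_if_Ioo[OF h_meas \<open>a < b\<close>] set_borel_measurable_mono_on[OF \<psi>]
    by (rule set_borel_measurable_mult)
  have \<psi>_bound: "\<bar>\<psi> x\<bar> \<le> max \<bar>\<psi> a\<bar> \<bar>\<psi> b\<bar>" if "x \<in> {a..b}" for x
    using that mono_onD[OF \<psi>, of a x] mono_onD[OF \<psi>, of x b] by auto
  show "AE x in lborel. x \<in> {a..b} \<longrightarrow> \<bar>h x * \<psi> x\<bar> \<le> \<bar>K\<bar> * max \<bar>\<psi> a\<bar> \<bar>\<psi> b\<bar>"
    using AE_Icc_if_AE_Ioo[OF h_bdd]
    by eventually_elim (auto simp: abs_mult intro!: mult_mono \<psi>_bound)
qed

lemma set_integral_mult_mono_on_pos:
  fixes h \<psi> :: "real \<Rightarrow> real"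
  assumes T: "T > 0" and h_meas: "set_borel_measurable lborel {0<..<T} h"
    and h_bdd: "AE t in lborel. t \<in> {0<..<T} \<longrightarrow> \<bar>h t\<bar> \<le> K"
    and h_pos: "C > 0" "AE t in lborel. t \<in> {0<..<T} \<longrightarrow> C \<le> h t"
    and \<psi>: "mono_on {0..T} \<psi>" "\<psi> 0 > 0"
  shows "(LINT \<tau>:{0..T}|lborel. h \<tau> * \<psi> \<tau>) > 0"
proof -
  have "(LINT \<tau>:{0..T}|lborel. C * \<psi> 0) \<le> (LINT \<tau>:{0..T}|lborel. h \<tau> * \<psi> \<tau>)"
  proof (rule set_integral_mono_AE)
    show "set_integrable lborel {0..T} (\<lambda>\<tau>. C * \<psi> 0)"
      by (rule borel_integrable_atLeastAtMost'[OF continuous_on_const])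
    show "set_integrable lborel {0..T} (\<lambda>\<tau>. h \<tau> * \<psi> \<tau>)"
      by (rule set_integrable_mult_mono_on[OF T h_meas h_bdd \<psi>(1)])
    have lower: "C * \<psi> 0 \<le> h x * \<psi> x" if "x \<in> {0..T}" "C \<le> h x" for x
      using that h_pos(1) \<psi>(2) mono_onD[OF \<psi>(1), of 0 x] by (intro mult_mono) auto
    show "AE x\<in>{0..T} in lborel. C * \<psi> 0 \<le> h x * \<psi> x"
      using AE_Icc_if_AE_Ioo[OF h_pos(2)] by eventually_elim (auto intro: lower)
  qed
  moreover have "(LINT \<tau>:{0..T}|lborel. C * \<psi> 0) = T * (C * \<psi> 0)"
    using T by (subst set_integral_const) (auto simp: emeasure_lborel_Icc_eq)
  moreover have "0 < T * (C * \<psi> 0)" using T h_pos(1) \<psi>(2) by simp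
  ultimately show ?thesis by linarith
qed

section \<open>Identification of the source terms\<close>

text \<open>The kernel of the Duhamel formula for the \<open>n\<close>-th mode.\<close>
definition decay :: "real \<Rightarrow> real \<Rightarrow> (real \<Rightarrow> real) \<Rightarrow> nat \<Rightarrow> real \<Rightarrow> real" where
  "decay R0 T a n \<tau> = exp (- lam R0 n * (LINT s:{\<tau>..T}|lborel. a s))"

lemma decay_pos: "decay R0 T a n \<tau> > 0"
  unfolding decay_def by simp

lemma mono_on_decay:
  assumes "set_integrable lborel {0..T} a" "\<And>t. t \<in> {0..T} \<Longrightarrow> 0 \<le> a t"
  shows "mono_on {0..T} (decay R0 T a n)"
proof (rule mono_onI)
  fix x y assume "x \<in> {0..T}" "y \<in> {0..T}" "x \<le> y"
  then have "lam R0 n * (LINT s:{y..T}|lborel. a s) \<le> lam R0 n * (LINT s:{x..T}|lborel. a s)"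
    using assms by (intro mult_left_mono set_integral_tail_antimono) (auto simp: lam_def)
  then show "decay R0 T a n x \<le> decay R0 T a n y" unfolding decay_def by simp
qed

lemma u_coef_eq:
  "u_coef M B R0 T a h f g n = (\<lambda>w.
    coef R0 f n * (LINT \<tau>:{0..T}|lborel. h \<tau> * decay R0 T a n \<tau>)
    + coef R0 g n * wiener_integral M B T (decay R0 T a n) w)"
  unfolding u_coef_def decay_def[abs_def] ..

lemma integral_u_coef:
  assumes B: "fbm M H B" and T: "T > 0" and decay: "mono_on {0..T} (decay R0 T a n)"
  shows "integral\<^sup>L M (u_coef M B R0 T a h f g n) =
    coef R0 f n * (LINT \<tau>:{0..T}|lborel. h \<tau> * decay R0 T a n \<tau>)"
proof -
  interpret prob_space M using fbm_prob_space[OF B] .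
  show ?thesis unfolding u_coef_eq
    by (intro integral_affine_centered sq_integrable_imp_integrable
        wiener_integral_L2_limit(1)[OF B T decay] integral_wiener_integral[OF B T decay])
qed

lemma covariance_u_coef:
  assumes B: "fbm M H B" and T: "T > 0"
    and decay: "mono_on {0..T} (decay R0 T a m)" "mono_on {0..T} (decay R0 T a n)"
  shows "covariance M (u_coef M B R0 T a h f g m) (u_coef M B R0 T a h f g n) =
    coef R0 g m * coef R0 g n *
      (\<integral>w. wiener_integral M B T (decay R0 T a m) w * wiener_integral M B T (decay R0 T a n) w \<partial>M)"
proof -
  interpret prob_space M using fbm_prob_space[OF B] .
  show ?thesis unfolding u_coef_eq
    using wiener_integral_L2_limit(1)[OF B T] integral_wiener_integral[OF B T] decay
    by (intro covariance_affine_centered) simp_all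
qed

lemma eq_up_to_sign_if_products_eq:
  fixes x y :: "nat \<Rightarrow> real"
  assumes prod: "\<And>m n. m \<ge> 1 \<Longrightarrow> n \<ge> 1 \<Longrightarrow> x m * x n = y m * y n"
  shows "\<exists>s. (s = 1 \<or> s = -1) \<and> (\<forall>n\<ge>1. x n = s * y n)"
proof (cases "\<exists>n0\<ge>1. y n0 \<noteq> 0")
  case True
  then obtain n0 where n0: "n0 \<ge> 1" "y n0 \<noteq> 0" by blast
  define s where "s = x n0 / y n0"
  have "s^2 = 1"
    using prod[OF n0(1) n0(1)] n0(2) by (simp add: s_def power_divide power2_eq_square)
  then have "s = 1 \<or> s = -1" by (simp add: power2_eq_1_iff)
  moreover have "x n = s * y n" if "n \<ge> 1" for n
  proof -
    have "y n0 * (s * x n) = y n0 * y n"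
      using prod[OF n0(1) that] n0(2) by (simp add: s_def)
    then have "s * x n = y n" using n0(2) by simp
    then show ?thesis using \<open>s^2 = 1\<close> by (metis mult.assoc mult_1 power2_eq_square)
  qed
  ultimately show ?thesis by blast
next
  case False
  then have "x n = 1 * y n" if "n \<ge> 1" for n
    using prod[OF that that] that by (simp add: power2_eq_square[symmetric])
  then show ?thesis by blast
qed

theorem theorem4p1:
  fixes R0 T a0 a1 H :: real
    and a h f1 g1 f2 g2 :: "real \<Rightarrow> real"
    and M :: "'w measure" and B :: "real \<Rightarrow> 'w \<Rightarrow> real"
  assumes R0: "R0 > 0" and T: "T > 0"
    and a_meas: "set_borel_measurable lborel {0..T} a"
    and a0: "0 < a0" and a_bounds: "\<forall>t\<in>{0..T}. a0 \<le> a t \<and> a t \<le> a1"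
    and B: "fbm M H B"
    and h_meas: "set_borel_measurable lborel {0<..<T} h"
    and h_bdd: "\<exists>K. AE t in lborel. t \<in> {0<..<T} \<longrightarrow> \<bar>h t\<bar> \<le> K"
    and h_pos: "\<exists>C>0. AE t in lborel. t \<in> {0<..<T} \<longrightarrow> C \<le> h t"
    and f1: "L2r R0 f1" and g1: "L2r R0 g1" and g1_nz: "L2r_norm_sq R0 g1 \<noteq> 0"
    and f2: "L2r R0 f2" and g2: "L2r R0 g2" and g2_nz: "L2r_norm_sq R0 g2 \<noteq> 0"
    and mean_eq: "\<forall>n\<ge>1. integral\<^sup>L M (u_coef M B R0 T a h f1 g1 n)
                        = integral\<^sup>L M (u_coef M B R0 T a h f2 g2 n)"
    and cov_eq: "\<forall>m\<ge>1. \<forall>n\<ge>1.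
        covariance M (u_coef M B R0 T a h f1 g1 m) (u_coef M B R0 T a h f1 g1 n)
      = covariance M (u_coef M B R0 T a h f2 g2 m) (u_coef M B R0 T a h f2 g2 n)"
  shows "(AE r in lborel. r \<in> {0..R0} \<longrightarrow> f1 r = f2 r) \<and>
         ((AE r in lborel. r \<in> {0..R0} \<longrightarrow> g1 r = g2 r) \<or>
          (AE r in lborel. r \<in> {0..R0} \<longrightarrow> g1 r = - g2 r))"
proof -
  have a_nonneg: "0 \<le> a t" if "t \<in> {0..T}" for t
    using a_bounds that a0 by (meson less_imp_le order_trans)
  have "set_integrable lborel {0..T} a"
    using a_meas a_bounds a_nonneg by (intro set_integrable_bounded[where K=a1]) auto
  then have decay: "mono_on {0..T} (decay R0 T a n)" for n by (rule mono_on_decay[OF _ a_nonneg])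
  obtain K C where h_bounds: "AE t in lborel. t \<in> {0<..<T} \<longrightarrow> \<bar>h t\<bar> \<le> K"
    "C > 0" "AE t in lborel. t \<in> {0<..<T} \<longrightarrow> C \<le> h t"
    using h_bdd h_pos by blast
  have "coef R0 f1 n = 1 * coef R0 f2 n" if "n \<ge> 1" for n
  proof -
    have "0 < (LINT \<tau>:{0..T}|lborel. h \<tau> * decay R0 T a n \<tau>)"
      by (rule set_integral_mult_mono_on_pos[OF T h_meas h_bounds decay decay_pos])
    then show ?thesis using mean_eq[rule_format, OF that] by (simp add: integral_u_coef[OF B T decay])
  qed
  then have f: "AE r in lborel. r \<in> {0..R0} \<longrightarrow> f1 r = 1 * f2 r" by (rule AE_eq_if_coef_eq[OF R0 f1 f2])
  have "coef R0 g1 m * coef R0 g1 n = coef R0 g2 m * coef R0 g2 n" if "m \<ge> 1" "n \<ge> 1" for m n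
    using cov_eq[rule_format, OF that] wiener_integral_mult_pos[OF B T decay decay decay_pos decay_pos, of m n]
    by (simp add: covariance_u_coef[OF B T decay decay])
  then obtain s where s: "s = 1 \<or> s = -1" "\<And>n. n \<ge> 1 \<Longrightarrow> coef R0 g1 n = s * coef R0 g2 n"
    using eq_up_to_sign_if_products_eq by blast
  have g: "AE r in lborel. r \<in> {0..R0} \<longrightarrow> g1 r = s * g2 r" by (rule AE_eq_if_coef_eq[OF R0 g1 g2 s(2)])
  from s(1) have "(AE r in lborel. r \<in> {0..R0} \<longrightarrow> g1 r = g2 r) \<or>
      (AE r in lborel. r \<in> {0..R0} \<longrightarrow> g1 r = - g2 r)"
    using g by (elim disjE) simp_all
  with f show ?thesis by simp
qed

end
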